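(* Let $d\ge 1$, let $1<s<2^d$ with $s=j\cdot 2^k$, $j$ odd, $k\ge 0$. For $t\ge 0$ set $\lambda_t=\lambda^*(d+t,2^t s)$ and $c_t=\frac12-\frac{2^{d-k}-1}{2^{d+t+1}-1}$. Then for every $t\ge 0$, $\lambda_t\le \frac12+c_t\lambda_{t+1}$. More precisely, for every $n\ge d+t+1$ and every $A\subseteq\mathbb{F}_2^n$, \[\lambda^*(n,d+t,2^t s,A)\le \frac12+c_t\,\lambda^*(n,d+t+1,2^{t+1}s,A).\]
   Context: For integers $n\ge d\ge 1$, a $d$-flat in $\mathbb{F}_2^n$ is a set $x_0+U$ with $x_0\in\mathbb{F}_2^n$ and $U$ a $d$-dimensional linear subspace of $\mathbb{F}_2^n$. For $A\subseteq\mathbb{F}_2^n$ and an integer $0\le s\le 2^d$, $\lambda^*(n,d,s,A)$ denotes the fraction of $d$-flats $Q$ in $\mathbb{F}_2^n$ with $|Q\cap A|=s$. Let $\lambda^*(n,d,s)=\max_{A}\lambda^*(n,d,s,A)$ and $\lambda^*(d,s)=\lim_{n\to\infty}\lambda^*(n,d,s)$. *)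

theory Defs
  imports Complex_Main
begin

text \<open>Vectors of F_2^n are represented as functions nat => bool vanishing from index n on;
  addition is coordinatewise exclusive or.\<close>

definition F2n :: "nat \<Rightarrow> (nat \<Rightarrow> bool) set" where
  "F2n n = {v. \<forall>i\<ge>n. \<not> v i}"

definition vadd :: "(nat \<Rightarrow> bool) \<Rightarrow> (nat \<Rightarrow> bool) \<Rightarrow> (nat \<Rightarrow> bool)" where
  "vadd v w = (\<lambda>i. v i \<noteq> w i)"

text \<open>F_2-linear combinations of a finite set of vectors (coefficients in F_2 = choice of a subset).\<close>
definition vsum :: "(nat \<Rightarrow> bool) set \<Rightarrow> (nat \<Rightarrow> bool)" where
  "vsum S = (\<lambda>i. odd (card {v\<in>S. v i}))"

definition span2 :: "(nat \<Rightarrow> bool) set \<Rightarrow> (nat \<Rightarrow> bool) set" where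
  "span2 B = vsum ` Pow B"

definition lin_indep2 :: "(nat \<Rightarrow> bool) set \<Rightarrow> bool" where
  "lin_indep2 B \<longleftrightarrow> finite B \<and> inj_on vsum (Pow B)"

definition subspace_dim :: "nat \<Rightarrow> nat \<Rightarrow> (nat \<Rightarrow> bool) set \<Rightarrow> bool" where
  "subspace_dim n d U \<longleftrightarrow>
     (\<exists>B. B \<subseteq> F2n n \<and> lin_indep2 B \<and> card B = d \<and> U = span2 B)"

definition flats :: "nat \<Rightarrow> nat \<Rightarrow> (nat \<Rightarrow> bool) set set" where
  "flats n d = {Q. \<exists>x0 U. x0 \<in> F2n n \<and> subspace_dim n d U \<and> Q = vadd x0 ` U}"

definition lam :: "nat \<Rightarrow> nat \<Rightarrow> nat \<Rightarrow> (nat \<Rightarrow> bool) set \<Rightarrow> real" where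
  "lam n d s A = real (card {Q \<in> flats n d. card (Q \<inter> A) = s}) / real (card (flats n d))"

definition lamN :: "nat \<Rightarrow> nat \<Rightarrow> nat \<Rightarrow> real" where
  "lamN n d s = Max ((\<lambda>A. lam n d s A) ` Pow (F2n n))"

definition lamstar :: "nat \<Rightarrow> nat \<Rightarrow> real" where
  "lamstar d s = lim (\<lambda>n. lamN n d s)"

end

theory Submission
  imports Defs
begin

text \<open>Flats are counted through frames (an origin and an ordered basis), so that a random
  \<open>D\<close>-flat of \<open>\<bbbF>\<^sub>2\<^sup>n\<close> is the flat spanned by the first \<open>D\<close> vectors of a random \<open>(D+1)\<close>-frame.
  Grouping these frames by the \<open>(D+1)\<close>-flat \<open>Q\<close> they span, the \<open>D\<close>-flat becomes a random affine
  hyperplane of \<open>Q \<cong> \<bbbF>\<^sub>2\<^sup>D\<^sup>+\<^sup>1\<close>.  If \<open>|Q \<inter> A| \<noteq> 2S\<close>, a hyperplane and its parallel translate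
  cannot both meet \<open>A\<close> in \<open>S\<close> points, so at most half of them do.  If \<open>|Q \<inter> A| = 2S = j 2\<^sup>K\<^sup>+\<^sup>1\<close>
  with \<open>j\<close> odd, the hyperplanes meeting \<open>A\<close> in \<open>S\<close> points are zeros of the Walsh transform of the
  indicator of \<open>Q \<inter> A\<close>, whose coefficient at \<open>0\<close> is not divisible by \<open>2\<^sup>K\<^sup>+\<^sup>2\<close>; a 2-adic
  uncertainty principle then leaves at least \<open>2\<^sup>D\<^sup>-\<^sup>K\<close> non-zeros.  Averaging over \<open>Q\<close> gives the
  inequality for every \<open>n\<close> and \<open>A\<close>.  The maxima over \<open>A\<close> decrease with \<open>n\<close>, because a random flat
  of \<open>\<bbbF>\<^sub>2\<^sup>n\<^sup>+\<^sup>1\<close> is the image of a random flat of \<open>\<bbbF>\<^sub>2\<^sup>n\<close> under a random injective affine map;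
  so they converge and the inequality passes to \<open>lamstar\<close>.\<close>

section \<open>Vectors, linear combinations and independent sequences\<close>

definition vzero :: "nat \<Rightarrow> bool" where "vzero = (\<lambda>_. False)"

lemma vadd_assoc: "vadd (vadd x y) z = vadd x (vadd y z)" by (auto simp: vadd_def)
lemma vadd_vzero[simp]: "vadd vzero x = x" "vadd x vzero = x" by (auto simp: vadd_def vzero_def)
lemma vadd_cancel_left[simp]: "vadd x (vadd x y) = y" by (auto simp: vadd_def)
lemma vadd_cancel_right[simp]: "vadd (vadd y x) x = y" by (auto simp: vadd_def)
lemma vadd_left_inj[simp]: "vadd x y = vadd x z \<longleftrightarrow> y = z" by (auto simp: vadd_def fun_eq_iff)
lemma vadd_right_inj[simp]: "vadd y x = vadd z x \<longleftrightarrow> y = z" by (auto simp: vadd_def fun_eq_iff)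

lemma vadd_in_F2n: "x \<in> F2n n \<Longrightarrow> y \<in> F2n n \<Longrightarrow> vadd x y \<in> F2n n"
  by (auto simp: F2n_def vadd_def)

lemma vzero_in_F2n[simp]: "vzero \<in> F2n n" by (auto simp: F2n_def vzero_def)

lemma F2n_eq_image_Pow: "F2n n = (\<lambda>c i. i \<in> c) ` Pow {..<n}"
proof
  show "(\<lambda>c i. i \<in> c) ` Pow {..<n} \<subseteq> F2n n" by (auto simp: F2n_def)
  show "F2n n \<subseteq> (\<lambda>c i. i \<in> c) ` Pow {..<n}"
  proof
    fix x assume "x \<in> F2n n"
    then have "x = (\<lambda>i. i \<in> {i. x i})" "{i. x i} \<in> Pow {..<n}"
      by (auto simp: F2n_def not_le[symmetric])
    then show "x \<in> (\<lambda>c i. i \<in> c) ` Pow {..<n}" by blast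
  qed
qed

lemma finite_F2n[simp]: "finite (F2n n)"
  unfolding F2n_eq_image_Pow by simp

lemma card_F2n: "card (F2n n) = 2 ^ n"
proof -
  have "inj_on (\<lambda>c i. i \<in> c) (Pow {..<n})"
    by (auto simp: inj_on_def fun_eq_iff)
  then show ?thesis unfolding F2n_eq_image_Pow by (simp add: card_image card_Pow)
qed

lemma support_F2n_subset: "a \<in> F2n r \<Longrightarrow> {i. a i} \<subseteq> {..<r}"
  by (auto simp: F2n_def not_le[symmetric])

lemma finite_support_F2n: "a \<in> F2n r \<Longrightarrow> finite {i. a i}"
  using support_F2n_subset finite_subset by blast

lemma odd_card_sym_diff:
  assumes "finite X" "finite Y"
  shows "odd (card (sym_diff X Y)) = (odd (card X) \<noteq> odd (card Y))"
proof -
  have "card X + card Y = card (X \<union> Y) + card (X \<inter> Y)"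
    using card_Un_Int assms by blast
  moreover have "card ((X \<union> Y) - (X \<inter> Y)) = card (X \<union> Y) - card (X \<inter> Y)"
    using assms by (intro card_Diff_subset) auto
  moreover have "card (X \<inter> Y) \<le> card (X \<union> Y)"
    using assms by (intro card_mono) auto
  moreover have "(X - Y) \<union> (Y - X) = (X \<union> Y) - (X \<inter> Y)" by blast
  ultimately show ?thesis by presburger
qed

definition lincomb :: "(nat \<Rightarrow> nat \<Rightarrow> bool) \<Rightarrow> nat set \<Rightarrow> nat \<Rightarrow> bool" where
  "lincomb v c = (\<lambda>k. odd (card {i\<in>c. v i k}))"

lemma lincomb_empty[simp]: "lincomb v {} = vzero" by (simp add: lincomb_def vzero_def)

lemma lincomb_insert:
  assumes "finite c" "i \<notin> c"
  shows "lincomb v (insert i c) = vadd (v i) (lincomb v c)"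
proof -
  have "odd (card {j\<in>insert i c. v j k}) = (v i k \<noteq> odd (card {j\<in>c. v j k}))" for k
  proof -
    have "{j\<in>insert i c. v j k} = (if v i k then insert i {j\<in>c. v j k} else {j\<in>c. v j k})"
      by auto
    then show ?thesis using assms by auto
  qed
  then show ?thesis by (simp add: lincomb_def vadd_def)
qed

lemma lincomb_singleton[simp]: "lincomb v {i} = v i"
  using lincomb_insert[of "{}" i v] by simp

lemma lincomb_remove: "finite c \<Longrightarrow> r \<in> c \<Longrightarrow> lincomb v c = vadd (v r) (lincomb v (c - {r}))"
  using lincomb_insert[of "c - {r}" r v] by (simp add: insert_absorb)

lemma lincomb_sym_diff:
  assumes "finite c" "finite c'"
  shows "lincomb v (sym_diff c c') = vadd (lincomb v c) (lincomb v c')"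
proof -
  have "odd (card {i \<in> sym_diff c c'. v i k}) = (odd (card {i\<in>c. v i k}) \<noteq> odd (card {i\<in>c'. v i k}))"
    for k
  proof -
    have "{i \<in> sym_diff c c'. v i k} = sym_diff {i\<in>c. v i k} {i\<in>c'. v i k}"
      by auto
    then show ?thesis using odd_card_sym_diff[of "{i\<in>c. v i k}" "{i\<in>c'. v i k}"] assms by simp
  qed
  then show ?thesis by (simp add: lincomb_def vadd_def)
qed

lemma lincomb_cong: "(\<And>i. i \<in> c \<Longrightarrow> v i = w i) \<Longrightarrow> lincomb v c = lincomb w c"
proof -
  assume "\<And>i. i \<in> c \<Longrightarrow> v i = w i"
  then have "{i\<in>c. v i k} = {i\<in>c. w i k}" for k by auto
  then show ?thesis unfolding lincomb_def by simp
qed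

definition subspace2 :: "(nat \<Rightarrow> bool) set \<Rightarrow> bool" where
  "subspace2 U \<longleftrightarrow> vzero \<in> U \<and> (\<forall>x\<in>U. \<forall>y\<in>U. vadd x y \<in> U)"

lemma lincomb_in_subspace2:
  assumes "subspace2 U" "finite c" "\<And>i. i \<in> c \<Longrightarrow> v i \<in> U"
  shows "lincomb v c \<in> U"
  using assms(2,3)
proof (induction c rule: finite_induct)
  case empty then show ?case using assms(1) by (simp add: subspace2_def)
next
  case (insert i c) then show ?case using assms(1) by (simp add: lincomb_insert subspace2_def)
qed

lemma subspace2_F2n: "subspace2 (F2n n)" by (simp add: subspace2_def vadd_in_F2n)

definition span_seq :: "(nat \<Rightarrow> nat \<Rightarrow> bool) \<Rightarrow> nat \<Rightarrow> (nat \<Rightarrow> bool) set" where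
  "span_seq v r = lincomb v ` Pow {..<r}"

definition indep_seq :: "(nat \<Rightarrow> nat \<Rightarrow> bool) \<Rightarrow> nat \<Rightarrow> bool" where
  "indep_seq v r \<longleftrightarrow> inj_on (lincomb v) (Pow {..<r})"

lemma finite_span_seq[simp]: "finite (span_seq v r)" by (simp add: span_seq_def)

lemma card_span_seq: "indep_seq v r \<Longrightarrow> card (span_seq v r) = 2 ^ r"
  by (simp add: span_seq_def indep_seq_def card_image card_Pow)

lemma subspace2_span_seq: "subspace2 (span_seq v r)"
  unfolding subspace2_def
proof (intro conjI ballI)
  have "lincomb v {} \<in> lincomb v ` Pow {..<r}" by blast
  then show "vzero \<in> span_seq v r" unfolding span_seq_def by simp
  fix x y assume "x \<in> span_seq v r" "y \<in> span_seq v r"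
  then obtain c c' where c: "c \<subseteq> {..<r}" "c' \<subseteq> {..<r}" "x = lincomb v c" "y = lincomb v c'"
    by (auto simp: span_seq_def)
  then have "finite c" "finite c'" using finite_subset by blast+
  with c show "vadd x y \<in> span_seq v r"
    unfolding span_seq_def using lincomb_sym_diff[of c c' v]
    by (intro image_eqI[of _ _ "sym_diff c c'"]) auto
qed

lemma vzero_in_span_seq[simp]: "vzero \<in> span_seq v r"
  using subspace2_span_seq subspace2_def by blast

lemma vadd_in_span_seq: "x \<in> span_seq v r \<Longrightarrow> y \<in> span_seq v r \<Longrightarrow> vadd x y \<in> span_seq v r"
  using subspace2_span_seq subspace2_def by blast

lemma span_seq_subset: "subspace2 U \<Longrightarrow> (\<And>i. i < r \<Longrightarrow> v i \<in> U) \<Longrightarrow> span_seq v r \<subseteq> U"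
  unfolding span_seq_def by (auto intro: lincomb_in_subspace2 finite_subset)

lemma seq_in_span_seq: "i < r \<Longrightarrow> v i \<in> span_seq v r"
proof -
  assume "i < r"
  then have "lincomb v {i} \<in> lincomb v ` Pow {..<r}" by (intro imageI) auto
  then show ?thesis unfolding span_seq_def by simp
qed

lemma lincomb_eq_imp_in_span_seq:
  assumes "c \<subseteq> {..<Suc r}" "r \<in> c" "c' \<subseteq> {..<r}" "lincomb v c = lincomb v c'"
  shows "v r \<in> span_seq v r"
proof -
  have "finite c" using assms(1) finite_subset by blast
  then have "v r = vadd (lincomb v c') (lincomb v (c - {r}))"
    using lincomb_remove[of c r v] assms(2,4) by simp
  moreover have "c - {r} \<subseteq> {..<r}" using assms(1) by (auto simp: less_Suc_eq)
  then have "lincomb v (c - {r}) \<in> span_seq v r" "lincomb v c' \<in> span_seq v r"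
    using assms(3) unfolding span_seq_def by auto
  ultimately show ?thesis by (simp add: vadd_in_span_seq)
qed

lemma indep_seq_Suc: "indep_seq v (Suc r) \<longleftrightarrow> indep_seq v r \<and> v r \<notin> span_seq v r"
proof
  assume indep: "indep_seq v (Suc r)"
  then have "indep_seq v r" unfolding indep_seq_def by (rule inj_on_subset) auto
  moreover have "v r \<notin> span_seq v r"
  proof
    assume "v r \<in> span_seq v r"
    then obtain c where c: "c \<subseteq> {..<r}" "lincomb v {r} = lincomb v c" by (auto simp: span_seq_def)
    moreover have "{r} \<in> Pow {..<Suc r}" "c \<in> Pow {..<Suc r}" using c by auto
    ultimately have "{r} = c" using indep unfolding indep_seq_def inj_on_def by blast
    then show False using c by auto
  qed
  ultimately show "indep_seq v r \<and> v r \<notin> span_seq v r" by blast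
next
  assume indep: "indep_seq v r \<and> v r \<notin> span_seq v r"
  show "indep_seq v (Suc r)" unfolding indep_seq_def
  proof (rule inj_onI)
    fix c c' assume c: "c \<in> Pow {..<Suc r}" "c' \<in> Pow {..<Suc r}" and eq: "lincomb v c = lincomb v c'"
    have below: "r \<notin> b \<Longrightarrow> b \<in> Pow {..<Suc r} \<Longrightarrow> b \<subseteq> {..<r}" for b
      by (auto simp: less_Suc_eq)
    have "r \<in> c \<longleftrightarrow> r \<in> c'"
      using lincomb_eq_imp_in_span_seq[of c r c' v] lincomb_eq_imp_in_span_seq[of c' r c v]
        below c eq indep by auto
    then consider "r \<in> c" "r \<in> c'" | "c \<subseteq> {..<r}" "c' \<subseteq> {..<r}"
      using below c by blast
    then show "c = c'"
    proof cases
      case 1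
      have "finite c" "finite c'" using c finite_subset by auto
      then have "lincomb v (c - {r}) = lincomb v (c' - {r})"
        using eq lincomb_remove 1 by (metis vadd_left_inj)
      moreover have "c - {r} \<in> Pow {..<r}" "c' - {r} \<in> Pow {..<r}" using c by (auto simp: less_Suc_eq)
      ultimately have "c - {r} = c' - {r}" using indep unfolding indep_seq_def inj_on_def by blast
      then show ?thesis using 1 by (metis insert_Diff)
    next
      case 2
      then show ?thesis using indep eq unfolding indep_seq_def inj_on_def by blast
    qed
  qed
qed

text \<open>Independent \<open>r\<close>-tuples are padded with \<open>vzero\<close> from index \<open>r\<close> on, so that each has a unique
  representative.\<close>

definition indep_seqs :: "(nat \<Rightarrow> bool) set \<Rightarrow> nat \<Rightarrow> (nat \<Rightarrow> nat \<Rightarrow> bool) set" where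
  "indep_seqs U r = {v. (\<forall>i<r. v i \<in> U) \<and> (\<forall>i\<ge>r. v i = vzero) \<and> indep_seq v r}"

definition truncate_seq :: "(nat \<Rightarrow> nat \<Rightarrow> bool) \<Rightarrow> nat \<Rightarrow> nat \<Rightarrow> nat \<Rightarrow> bool" where
  "truncate_seq v r = (\<lambda>i. if i < r then v i else vzero)"

lemma indep_seq_cong: "(\<And>i. i < r \<Longrightarrow> v i = w i) \<Longrightarrow> indep_seq v r = indep_seq w r"
  unfolding indep_seq_def by (rule inj_on_cong) (auto intro!: lincomb_cong)

lemma span_seq_cong: "(\<And>i. i < r \<Longrightarrow> v i = w i) \<Longrightarrow> span_seq v r = span_seq w r"
  unfolding span_seq_def by (rule image_cong) (auto intro!: lincomb_cong)

lemma fun_upd_in_indep_seqs: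
  assumes "w \<in> indep_seqs U r" "y \<in> U - span_seq w r"
  shows "w(r := y) \<in> indep_seqs U (Suc r)"
proof -
  have "indep_seq (w(r := y)) r = indep_seq w r" by (rule indep_seq_cong) simp
  moreover have "span_seq (w(r := y)) r = span_seq w r" by (rule span_seq_cong) simp
  ultimately have "indep_seq (w(r := y)) (Suc r)"
    using assms indep_seq_Suc by (simp add: indep_seqs_def)
  then show ?thesis using assms by (auto simp: indep_seqs_def less_Suc_eq)
qed

lemma truncate_seq_fun_upd[simp]: "w \<in> indep_seqs U r \<Longrightarrow> truncate_seq (w(r := y)) r = w"
  by (auto simp: truncate_seq_def indep_seqs_def fun_eq_iff)

lemma span_seq_truncate_seq: "r \<le> s \<Longrightarrow> span_seq (truncate_seq v s) r = span_seq v r"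
  by (rule span_seq_cong) (simp add: truncate_seq_def)

lemma truncate_seq_in_indep_seqs:
  assumes "v \<in> indep_seqs U (Suc r)"
  shows "truncate_seq v r \<in> indep_seqs U r" "v r \<in> U - span_seq (truncate_seq v r) r"
    "(truncate_seq v r)(r := v r) = v"
proof -
  have "indep_seq (truncate_seq v r) r = indep_seq v r"
    by (rule indep_seq_cong) (simp add: truncate_seq_def)
  moreover have "indep_seq v r" "v r \<notin> span_seq v r" "v r \<in> U"
    using assms indep_seq_Suc by (auto simp: indep_seqs_def)
  ultimately show "truncate_seq v r \<in> indep_seqs U r" "v r \<in> U - span_seq (truncate_seq v r) r"
    using assms span_seq_truncate_seq[of r r v] by (auto simp: indep_seqs_def truncate_seq_def)
  show "(truncate_seq v r)(r := v r) = v"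
    using assms by (auto simp: truncate_seq_def indep_seqs_def fun_eq_iff)
qed

lemma bij_betw_indep_seqs_Suc:
  "bij_betw (\<lambda>(w, y). w(r := y)) (SIGMA w:{w\<in>indep_seqs U r. P w}. U - span_seq w r)
     {v\<in>indep_seqs U (Suc r). P (truncate_seq v r)}"
proof (rule bij_betw_byWitness[where f'="\<lambda>v. (truncate_seq v r, v r)"])
  show "\<forall>a\<in>(SIGMA w:{w\<in>indep_seqs U r. P w}. U - span_seq w r).
      (\<lambda>v. (truncate_seq v r, v r)) ((\<lambda>(w, y). w(r := y)) a) = a"
    by auto
  show "\<forall>a'\<in>{v\<in>indep_seqs U (Suc r). P (truncate_seq v r)}.
      (\<lambda>(w, y). w(r := y)) ((\<lambda>v. (truncate_seq v r, v r)) a') = a'"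
    using truncate_seq_in_indep_seqs(3) by auto
  show "(\<lambda>(w, y). w(r := y)) ` (SIGMA w:{w\<in>indep_seqs U r. P w}. U - span_seq w r)
      \<subseteq> {v\<in>indep_seqs U (Suc r). P (truncate_seq v r)}"
    using fun_upd_in_indep_seqs by auto
  show "(\<lambda>v. (truncate_seq v r, v r)) ` {v\<in>indep_seqs U (Suc r). P (truncate_seq v r)}
      \<subseteq> (SIGMA w:{w\<in>indep_seqs U r. P w}. U - span_seq w r)"
    using truncate_seq_in_indep_seqs(1,2) by auto
qed

lemma indep_seqs_0: "indep_seqs U 0 = {\<lambda>_. vzero}"
  by (auto simp: indep_seqs_def indep_seq_def fun_eq_iff)

lemma finite_indep_seqs: "finite U \<Longrightarrow> finite (indep_seqs U r)"
proof (induction r)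
  case 0 then show ?case by (simp add: indep_seqs_0)
next
  case (Suc r)
  have "indep_seqs U (Suc r) = (\<lambda>(w, y). w(r := y)) ` (SIGMA w:indep_seqs U r. U - span_seq w r)"
    using bij_betw_indep_seqs_Suc[of r U "\<lambda>_. True"] by (simp add: bij_betw_def)
  then show ?case using Suc by auto
qed

lemma span_seq_subset_of_indep_seqs: "subspace2 U \<Longrightarrow> w \<in> indep_seqs U r \<Longrightarrow> span_seq w r \<subseteq> U"
  by (rule span_seq_subset) (auto simp: indep_seqs_def)

lemma card_indep_seqs_Suc_filter:
  assumes "subspace2 U" "finite U"
  shows "card {v\<in>indep_seqs U (Suc r). P (truncate_seq v r)} = (card U - 2 ^ r) * card {w\<in>indep_seqs U r. P w}"
proof -
  have "card {v\<in>indep_seqs U (Suc r). P (truncate_seq v r)} =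
      card (SIGMA w:{w\<in>indep_seqs U r. P w}. U - span_seq w r)"
    using bij_betw_indep_seqs_Suc[of r U P] by (rule bij_betw_same_card[symmetric])
  also have "\<dots> = (\<Sum>w\<in>{w\<in>indep_seqs U r. P w}. card (U - span_seq w r))"
    using assms finite_indep_seqs by (intro card_SigmaI) auto
  also have "\<dots> = (\<Sum>w\<in>{w\<in>indep_seqs U r. P w}. card U - 2 ^ r)"
  proof (rule sum.cong)
    fix w assume "w \<in> {w\<in>indep_seqs U r. P w}"
    then have "span_seq w r \<subseteq> U" "indep_seq w r"
      using span_seq_subset_of_indep_seqs assms by (auto simp: indep_seqs_def)
    then show "card (U - span_seq w r) = card U - 2 ^ r"
      using card_Diff_subset[of "span_seq w r" U] card_span_seq[of w r] by simp
  qed simp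
  finally show ?thesis by simp
qed

lemma card_indep_seqs:
  assumes "subspace2 U" "finite U"
  shows "card (indep_seqs U r) = (\<Prod>i<r. card U - 2 ^ i)"
proof (induction r)
  case 0 then show ?case by (simp add: indep_seqs_0)
next
  case (Suc r)
  then show ?case using card_indep_seqs_Suc_filter[OF assms, of r "\<lambda>_. True"] by simp
qed

section \<open>Flats and their frames\<close>

lemma card_filter_eq_sum_fibres:
  assumes "finite T"
  shows "card {\<tau>\<in>T. P \<tau>} = (\<Sum>Q\<in>f ` T. card {\<tau>\<in>T. f \<tau> = Q \<and> P \<tau>})"
proof -
  have "card {\<tau>\<in>T. P \<tau>} = (\<Sum>\<tau>\<in>T. if P \<tau> then 1 else 0)"
    using sum.inter_filter[OF assms, of "\<lambda>_. 1::nat" P] by simp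
  also have "\<dots> = (\<Sum>Q\<in>f ` T. \<Sum>\<tau>\<in>{\<tau>\<in>T. f \<tau> = Q}. if P \<tau> then 1 else 0)"
    by (rule sum.image_gen[OF assms])
  also have "\<dots> = (\<Sum>Q\<in>f ` T. card {\<tau>\<in>T. f \<tau> = Q \<and> P \<tau>})"
  proof (rule sum.cong[OF refl])
    fix Q
    have "{\<tau>\<in>{\<tau>\<in>T. f \<tau> = Q}. P \<tau>} = {\<tau>\<in>T. f \<tau> = Q \<and> P \<tau>}" by blast
    then show "(\<Sum>\<tau>\<in>{\<tau>\<in>T. f \<tau> = Q}. if P \<tau> then 1 else 0) = card {\<tau>\<in>T. f \<tau> = Q \<and> P \<tau>}"
      using sum.inter_filter[of "{\<tau>\<in>T. f \<tau> = Q}" "\<lambda>_. 1::nat" P] assms by simp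
  qed
  finally show ?thesis .
qed

lemma card_filter_comp_const_fibres:
  assumes "finite T" "\<And>Q. Q \<in> f ` T \<Longrightarrow> card {\<tau>\<in>T. f \<tau> = Q} = m"
  shows "card {\<tau>\<in>T. P (f \<tau>)} = m * card {Q\<in>f ` T. P Q}"
proof -
  have "card {\<tau>\<in>T. P (f \<tau>)} = (\<Sum>Q\<in>f ` T. card {\<tau>\<in>T. f \<tau> = Q \<and> P (f \<tau>)})"
    by (rule card_filter_eq_sum_fibres[OF assms(1)])
  also have "\<dots> = (\<Sum>Q\<in>f ` T. if P Q then m else 0)"
  proof (rule sum.cong[OF refl])
    fix Q assume "Q \<in> f ` T"
    have "{\<tau>\<in>T. f \<tau> = Q \<and> P (f \<tau>)} = (if P Q then {\<tau>\<in>T. f \<tau> = Q} else {})" by auto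
    then show "card {\<tau>\<in>T. f \<tau> = Q \<and> P (f \<tau>)} = (if P Q then m else 0)"
      using assms(2)[OF \<open>Q \<in> f ` T\<close>] by simp
  qed
  also have "\<dots> = (\<Sum>Q\<in>{Q\<in>f ` T. P Q}. m)"
    using sum.inter_filter[of "f ` T" "\<lambda>_. m" P] assms(1) by simp
  also have "\<dots> = m * card {Q\<in>f ` T. P Q}" by simp
  finally show ?thesis .
qed

lemma card_filter_Times_sum_left:
  assumes "finite A" "finite C"
  shows "card {\<mu>\<in>A \<times> C. P \<mu>} = (\<Sum>a\<in>A. card {M\<in>C. P (a, M)})"
proof -
  have "{\<mu>\<in>A \<times> C. P \<mu>} = (SIGMA a:A. {M\<in>C. P (a, M)})" by auto
  then show ?thesis using assms by (simp add: card_SigmaI)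
qed

lemma card_filter_Times_sum_right:
  assumes "finite A" "finite C"
  shows "card {\<mu>\<in>A \<times> C. P \<mu>} = (\<Sum>M\<in>C. card {a\<in>A. P (a, M)})"
proof -
  have "{\<mu>\<in>A \<times> C. P \<mu>} = (\<lambda>(M, a). (a, M)) ` (SIGMA M:C. {a\<in>A. P (a, M)})" by auto
  moreover have "inj_on (\<lambda>(M, a). (a, M)) (SIGMA M:C. {a\<in>A. P (a, M)})" by (auto simp: inj_on_def)
  ultimately have "card {\<mu>\<in>A \<times> C. P \<mu>} = card (SIGMA M:C. {a\<in>A. P (a, M)})" by (simp add: card_image)
  also have "\<dots> = (\<Sum>M\<in>C. card {a\<in>A. P (a, M)})" using assms by (intro card_SigmaI) auto
  finally show ?thesis .
qed

text \<open>A frame \<open>(x, v)\<close> of an \<open>r\<close>-flat consists of an origin \<open>x\<close> and an ordered basis \<open>v\<close> of its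
  direction; \<open>lam\<close> can be computed by counting frames instead of flats, because every flat has
  the same number \<open>frames_per_flat r\<close> of frames.\<close>

definition frames :: "nat \<Rightarrow> nat \<Rightarrow> ((nat \<Rightarrow> bool) \<times> (nat \<Rightarrow> nat \<Rightarrow> bool)) set" where
  "frames n r = F2n n \<times> indep_seqs (F2n n) r"

definition frame_flat :: "nat \<Rightarrow> (nat \<Rightarrow> bool) \<times> (nat \<Rightarrow> nat \<Rightarrow> bool) \<Rightarrow> (nat \<Rightarrow> bool) set" where
  "frame_flat r \<tau> = vadd (fst \<tau>) ` span_seq (snd \<tau>) r"

definition frames_per_flat :: "nat \<Rightarrow> nat" where
  "frames_per_flat r = 2 ^ r * (\<Prod>i<r. 2 ^ r - 2 ^ i)"

lemma finite_frames[simp]: "finite (frames n r)"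
  by (simp add: frames_def finite_indep_seqs)

lemma card_indep_seqs_F2n: "card (indep_seqs (F2n n) r) = (\<Prod>i<r. 2 ^ n - 2 ^ i)"
  using card_indep_seqs[OF subspace2_F2n finite_F2n] by (simp add: card_F2n)

lemma card_frames_pos: "r \<le> n \<Longrightarrow> card (frames n r) > 0"
proof -
  assume "r \<le> n"
  then have "(\<Prod>i<r. (2::nat) ^ n - 2 ^ i) > 0" by (intro prod_pos) (auto intro: power_strict_increasing)
  then show ?thesis unfolding frames_def by (simp add: card_cartesian_product card_F2n card_indep_seqs_F2n)
qed

lemma frames_per_flat_pos: "frames_per_flat r > 0"
  unfolding frames_per_flat_def by (auto intro!: prod_pos)

lemma span_seq_subset_F2n: "u \<in> indep_seqs (F2n m) r \<Longrightarrow> span_seq u r \<subseteq> F2n m"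
  by (rule span_seq_subset_of_indep_seqs[OF subspace2_F2n])

lemma span_seq_eq_of_indep_seqs:
  assumes "subspace2 U" "finite U" "card U = 2 ^ r" "v \<in> indep_seqs U r"
  shows "span_seq v r = U"
proof -
  have "span_seq v r \<subseteq> U" by (rule span_seq_subset_of_indep_seqs[OF assms(1,4)])
  moreover have "card (span_seq v r) = card U"
    using assms(3,4) card_span_seq by (simp add: indep_seqs_def)
  ultimately show ?thesis using card_subset_eq[OF assms(2)] by blast
qed

lemma lincomb_eq_vsum: "inj_on v c \<Longrightarrow> lincomb v c = vsum (v ` c)"
proof -
  assume inj: "inj_on v c"
  have "card {w \<in> v ` c. w k} = card {i\<in>c. v i k}" for k
  proof -
    have "{w \<in> v ` c. w k} = v ` {i\<in>c. v i k}" by auto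
    moreover have "card (v ` {i\<in>c. v i k}) = card {i\<in>c. v i k}"
      using inj by (intro card_image) (auto intro: inj_on_subset)
    ultimately show ?thesis by simp
  qed
  then show ?thesis by (simp add: lincomb_def vsum_def)
qed

lemma indep_seq_inj: "indep_seq v r \<Longrightarrow> inj_on v {..<r}"
proof (rule inj_onI)
  fix i j assume a: "indep_seq v r" "i \<in> {..<r}" "j \<in> {..<r}" "v i = v j"
  then have "lincomb v {i} = lincomb v {j}" by simp
  moreover have "{i} \<in> Pow {..<r}" "{j} \<in> Pow {..<r}" using a by auto
  ultimately have "{i} = {j}" using a(1) unfolding indep_seq_def inj_on_def by blast
  then show "i = j" by simp
qed

lemma Pow_image_eq: "Pow (v ` {..<r}) = image v ` Pow {..<r}"
  by (rule image_Pow_surj[symmetric]) simp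

lemma span2_image_eq_span_seq:
  assumes "inj_on v {..<r}"
  shows "span2 (v ` {..<r}) = span_seq v r"
proof -
  have "lincomb v c = vsum (v ` c)" if "c \<in> Pow {..<r}" for c
    using assms that by (intro lincomb_eq_vsum) (auto intro: inj_on_subset)
  then show ?thesis unfolding span2_def span_seq_def Pow_image_eq image_image
    by (auto intro: image_cong)
qed

lemma lin_indep2_image_iff_indep_seq:
  assumes "inj_on v {..<r}"
  shows "lin_indep2 (v ` {..<r}) \<longleftrightarrow> indep_seq v r"
proof -
  have "(vsum \<circ> image v) c = lincomb v c" if "c \<in> Pow {..<r}" for c
    using lincomb_eq_vsum[of v c] inj_on_subset[OF assms, of c] that by simp
  then have "inj_on (vsum \<circ> image v) (Pow {..<r}) \<longleftrightarrow> inj_on (lincomb v) (Pow {..<r})"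
    by (rule inj_on_cong)
  moreover have "inj_on vsum (image v ` Pow {..<r}) \<longleftrightarrow> inj_on (vsum \<circ> image v) (Pow {..<r})"
    by (rule comp_inj_on_iff[OF inj_on_image_Pow[OF assms]])
  ultimately show ?thesis unfolding lin_indep2_def indep_seq_def Pow_image_eq by simp
qed

lemma subspace_dim_span_seq:
  assumes "v \<in> indep_seqs (F2n n) r"
  shows "subspace_dim n r (span_seq v r)"
proof -
  have inj: "inj_on v {..<r}" using assms indep_seq_inj by (simp add: indep_seqs_def)
  have "v ` {..<r} \<subseteq> F2n n" using assms by (auto simp: indep_seqs_def)
  moreover have "lin_indep2 (v ` {..<r})"
    using assms lin_indep2_image_iff_indep_seq[OF inj] by (simp add: indep_seqs_def)
  moreover have "card (v ` {..<r}) = r" using inj by (simp add: card_image)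
  moreover have "span_seq v r = span2 (v ` {..<r})" using span2_image_eq_span_seq[OF inj] by simp
  ultimately show ?thesis unfolding subspace_dim_def by blast
qed

lemma subspace_dim_obtain_indep_seqs:
  assumes "subspace_dim n r U"
  obtains v where "v \<in> indep_seqs (F2n n) r" "span_seq v r = U"
proof -
  obtain B where B: "B \<subseteq> F2n n" "lin_indep2 B" "card B = r" "U = span2 B"
    using assms unfolding subspace_dim_def by blast
  then have "finite B" by (simp add: lin_indep2_def)
  then obtain e where "bij_betw e {..<r} B"
    using ex_bij_betw_nat_finite[of B] B(3) by (auto simp: atLeast0LessThan)
  define v where "v = (\<lambda>i. if i < r then e i else vzero)"
  have "bij_betw v {..<r} B"
    using \<open>bij_betw e {..<r} B\<close> by (rule bij_betw_cong[THEN iffD1, rotated]) (simp add: v_def)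
  then have inj: "inj_on v {..<r}" and img: "v ` {..<r} = B" by (simp_all add: bij_betw_def)
  have "indep_seq v r" using B(2) img lin_indep2_image_iff_indep_seq[OF inj] by simp
  moreover have "\<forall>i<r. v i \<in> F2n n" using B(1) img by blast
  moreover have "\<forall>i\<ge>r. v i = vzero" by (simp add: v_def)
  ultimately have "v \<in> indep_seqs (F2n n) r" by (simp add: indep_seqs_def)
  moreover have "span_seq v r = U" using B(4) img span2_image_eq_span_seq[OF inj] by simp
  ultimately show ?thesis by (rule that)
qed

lemma frame_flat_image: "frame_flat r ` frames n r = flats n r"
proof
  show "frame_flat r ` frames n r \<subseteq> flats n r"
  proof
    fix Q assume "Q \<in> frame_flat r ` frames n r"
    then obtain x v where "x \<in> F2n n" "v \<in> indep_seqs (F2n n) r" "Q = vadd x ` span_seq v r"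
      by (auto simp: frames_def frame_flat_def)
    then show "Q \<in> flats n r" unfolding flats_def using subspace_dim_span_seq by blast
  qed
  show "flats n r \<subseteq> frame_flat r ` frames n r"
  proof
    fix Q assume "Q \<in> flats n r"
    then obtain x U where x: "x \<in> F2n n" and U: "subspace_dim n r U" and Q: "Q = vadd x ` U"
      unfolding flats_def by blast
    obtain v where "v \<in> indep_seqs (F2n n) r" "span_seq v r = U"
      by (rule subspace_dim_obtain_indep_seqs[OF U])
    with x Q have "(x, v) \<in> frames n r" "frame_flat r (x, v) = Q"
      by (auto simp: frames_def frame_flat_def)
    then show "Q \<in> frame_flat r ` frames n r" by force
  qed
qed

lemma vadd_in_subspace2_of_coset:
  assumes "subspace2 U" "a \<in> vadd x0 ` U" "b \<in> vadd x0 ` U"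
  shows "vadd a b \<in> U"
proof -
  obtain u u' where "u \<in> U" "u' \<in> U" "a = vadd x0 u" "b = vadd x0 u'" using assms(2,3) by auto
  moreover have "vadd (vadd x0 u) (vadd x0 u') = vadd u u'" by (auto simp: vadd_def)
  ultimately show ?thesis using assms(1) by (simp add: subspace2_def)
qed

lemma vadd_image_subspace2_eq:
  assumes "subspace2 U" "x \<in> vadd x0 ` U"
  shows "vadd x ` U = vadd x0 ` U"
proof
  have x0: "x0 \<in> vadd x0 ` U" using assms(1) by (force simp: subspace2_def)
  show "vadd x0 ` U \<subseteq> vadd x ` U"
  proof
    fix z assume "z \<in> vadd x0 ` U"
    then have "vadd x z \<in> U" using vadd_in_subspace2_of_coset[OF assms] by blast
    then show "z \<in> vadd x ` U" using image_eqI[of z "vadd x" "vadd x z"] by simp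
  qed
  show "vadd x ` U \<subseteq> vadd x0 ` U"
  proof
    fix z assume "z \<in> vadd x ` U"
    then obtain w where "w \<in> U" "z = vadd x w" by auto
    moreover have "vadd x0 x \<in> U" using vadd_in_subspace2_of_coset[OF assms(1) x0 assms(2)] .
    ultimately have "z = vadd x0 (vadd (vadd x0 x) w)" "vadd (vadd x0 x) w \<in> U"
      using assms(1) by (auto simp: vadd_def subspace2_def)
    then show "z \<in> vadd x0 ` U" by blast
  qed
qed

lemma frame_fibre_eq:
  assumes "(x0, v0) \<in> frames n r"
  shows "{\<tau>\<in>frames n r. frame_flat r \<tau> = frame_flat r (x0, v0)} =
    frame_flat r (x0, v0) \<times> indep_seqs (span_seq v0 r) r"
    (is "?fibre = ?Q \<times> indep_seqs ?U r")
proof (rule set_eqI)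
  have x0: "x0 \<in> F2n n" and v0: "v0 \<in> indep_seqs (F2n n) r" using assms by (simp_all add: frames_def)
  have U: "subspace2 ?U" "finite ?U" "card ?U = 2 ^ r" "?U \<subseteq> F2n n"
    using v0 card_span_seq span_seq_subset_F2n[OF v0] subspace2_span_seq
    by (simp_all add: indep_seqs_def)
  have Q: "?Q = vadd x0 ` ?U" by (simp add: frame_flat_def)
  fix \<tau> :: "(nat \<Rightarrow> bool) \<times> (nat \<Rightarrow> nat \<Rightarrow> bool)"
  obtain x v where \<tau>: "\<tau> = (x, v)" by fastforce
  show "\<tau> \<in> ?fibre \<longleftrightarrow> \<tau> \<in> ?Q \<times> indep_seqs ?U r"
  proof
    assume "\<tau> \<in> ?fibre"
    then have v: "v \<in> indep_seqs (F2n n) r" and flat: "vadd x ` span_seq v r = vadd x0 ` ?U"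
      by (simp_all add: \<tau> frames_def frame_flat_def)
    have "vadd x vzero \<in> vadd x ` span_seq v r" by (intro imageI vzero_in_span_seq)
    then have x: "x \<in> vadd x0 ` ?U" using flat by simp
    have "v i \<in> ?U" if "i < r" for i
    proof -
      have "vadd x (v i) \<in> vadd x ` span_seq v r" by (intro imageI seq_in_span_seq[OF that])
      then have "vadd x (v i) \<in> vadd x0 ` ?U" using flat by simp
      then have "vadd x (vadd x (v i)) \<in> ?U" by (rule vadd_in_subspace2_of_coset[OF U(1) x])
      then show ?thesis by simp
    qed
    then show "\<tau> \<in> ?Q \<times> indep_seqs ?U r" using v x Q \<tau> by (simp add: indep_seqs_def)
  next
    assume "\<tau> \<in> ?Q \<times> indep_seqs ?U r"
    then have x: "x \<in> vadd x0 ` ?U" and v: "v \<in> indep_seqs ?U r" by (simp_all add: \<tau> Q)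
    then obtain u where "u \<in> ?U" "x = vadd x0 u" by blast
    then have "x \<in> F2n n" using x0 U(4) vadd_in_F2n by blast
    moreover have "v \<in> indep_seqs (F2n n) r" using v U(4) by (auto simp: indep_seqs_def)
    moreover have "frame_flat r \<tau> = ?Q"
      using span_seq_eq_of_indep_seqs[OF U(1-3) v] vadd_image_subspace2_eq[OF U(1) x] Q
      by (simp add: \<tau> frame_flat_def)
    ultimately show "\<tau> \<in> ?fibre" by (simp add: \<tau> frames_def)
  qed
qed

lemma card_frame_fibre:
  assumes "Q \<in> frame_flat r ` frames n r"
  shows "card {\<tau>\<in>frames n r. frame_flat r \<tau> = Q} = frames_per_flat r"
proof -
  obtain x0 v0 where \<sigma>: "(x0, v0) \<in> frames n r" and Q: "Q = frame_flat r (x0, v0)"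
    using assms by auto
  let ?U = "span_seq v0 r"
  have U: "subspace2 ?U" "card ?U = 2 ^ r"
    using \<sigma> card_span_seq subspace2_span_seq by (auto simp: frames_def indep_seqs_def)
  have "card Q = 2 ^ r" using U Q by (simp add: frame_flat_def card_image inj_on_def)
  moreover have "card (indep_seqs ?U r) = (\<Prod>i<r. 2 ^ r - 2 ^ i)"
    using card_indep_seqs[OF U(1)] U(2) by simp
  ultimately show ?thesis
    using frame_fibre_eq[OF \<sigma>] Q by (simp add: card_cartesian_product frames_per_flat_def)
qed

lemma card_frames_filter_flat:
  "card {\<tau>\<in>frames n r. P (frame_flat r \<tau>)} = frames_per_flat r * card {Q\<in>flats n r. P Q}"
proof -
  have "card {\<tau>\<in>frames n r. P (frame_flat r \<tau>)} =
      frames_per_flat r * card {Q\<in>frame_flat r ` frames n r. P Q}"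
    by (rule card_filter_comp_const_fibres[OF finite_frames card_frame_fibre])
  then show ?thesis by (simp only: frame_flat_image)
qed

lemma lam_eq_frames:
  "lam n r s A = real (card {\<tau>\<in>frames n r. card (frame_flat r \<tau> \<inter> A) = s}) / real (card (frames n r))"
  using card_frames_filter_flat[of n r "\<lambda>Q. card (Q \<inter> A) = s"] card_frames_filter_flat[of n r "\<lambda>_. True"]
    frames_per_flat_pos[of r]
  by (simp add: lam_def)

section \<open>Affine maps given by frames\<close>

text \<open>A frame \<open>\<sigma> \<in> frames m r\<close> also describes the injective affine map
  \<open>frame_map \<sigma> : \<bbbF>\<^sub>2\<^sup>r \<rightarrow> \<bbbF>\<^sub>2\<^sup>m\<close> with image \<open>frame_flat r \<sigma>\<close>, and \<open>frame_comp \<sigma> \<mu>\<close> is the frame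
  of the composite map \<open>frame_map \<sigma> \<circ> frame_map \<mu>\<close>.\<close>

definition linmap :: "(nat \<Rightarrow> nat \<Rightarrow> bool) \<Rightarrow> (nat \<Rightarrow> bool) \<Rightarrow> nat \<Rightarrow> bool" where
  "linmap u a = lincomb u {i. a i}"

definition frame_map :: "(nat \<Rightarrow> bool) \<times> (nat \<Rightarrow> nat \<Rightarrow> bool) \<Rightarrow> (nat \<Rightarrow> bool) \<Rightarrow> nat \<Rightarrow> bool" where
  "frame_map \<sigma> b = vadd (fst \<sigma>) (linmap (snd \<sigma>) b)"

definition frame_comp :: "(nat \<Rightarrow> bool) \<times> (nat \<Rightarrow> nat \<Rightarrow> bool) \<Rightarrow> (nat \<Rightarrow> bool) \<times> (nat \<Rightarrow> nat \<Rightarrow> bool)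
    \<Rightarrow> (nat \<Rightarrow> bool) \<times> (nat \<Rightarrow> nat \<Rightarrow> bool)" where
  "frame_comp \<sigma> \<mu> = (frame_map \<sigma> (fst \<mu>), \<lambda>i. linmap (snd \<sigma>) (snd \<mu> i))"

definition unit_vec :: "nat \<Rightarrow> nat \<Rightarrow> bool" where "unit_vec m = (\<lambda>i. i = m)"

lemma unit_vec_in_F2n: "m < N \<Longrightarrow> unit_vec m \<in> F2n N" by (auto simp: unit_vec_def F2n_def)

lemma linmap_unit_vec: "linmap u (unit_vec j) = u j"
proof -
  have "{i. unit_vec j i} = {j}" by (auto simp: unit_vec_def)
  then show ?thesis by (simp add: linmap_def)
qed

lemma linmap_vadd: "a \<in> F2n r \<Longrightarrow> b \<in> F2n r \<Longrightarrow> linmap u (vadd a b) = vadd (linmap u a) (linmap u b)"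
proof -
  assume ab: "a \<in> F2n r" "b \<in> F2n r"
  have "{i. vadd a b i} = sym_diff {i. a i} {i. b i}" by (auto simp: vadd_def)
  then show ?thesis
    unfolding linmap_def using lincomb_sym_diff[OF finite_support_F2n[OF ab(1)] finite_support_F2n[OF ab(2)]]
    by simp
qed

lemma linmap_image_F2n: "linmap u ` F2n r = span_seq u r"
  unfolding F2n_eq_image_Pow span_seq_def image_image by (simp add: linmap_def)

lemma inj_on_linmap: "indep_seq u r \<Longrightarrow> inj_on (linmap u) (F2n r)"
proof (rule inj_onI)
  fix a b assume a: "indep_seq u r" "a \<in> F2n r" "b \<in> F2n r" "linmap u a = linmap u b"
  then have "{i. a i} \<in> Pow {..<r}" "{i. b i} \<in> Pow {..<r}" using support_F2n_subset by auto
  then have "{i. a i} = {i. b i}" using a unfolding indep_seq_def inj_on_def linmap_def by blast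
  then show "a = b" by (auto simp: fun_eq_iff)
qed

lemma lincomb_in_F2n: "finite c \<Longrightarrow> (\<And>i. i \<in> c \<Longrightarrow> M i \<in> F2n r) \<Longrightarrow> lincomb M c \<in> F2n r"
  using lincomb_in_subspace2[OF subspace2_F2n] by blast

lemma lincomb_linmap:
  assumes "finite c" "\<And>i. i \<in> c \<Longrightarrow> M i \<in> F2n r"
  shows "lincomb (\<lambda>i. linmap u (M i)) c = linmap u (lincomb M c)"
  using assms
proof (induction c rule: finite_induct)
  case empty then show ?case by (simp add: linmap_def vzero_def)
next
  case (insert i c)
  have "lincomb M c \<in> F2n r" "M i \<in> F2n r" using insert by (auto intro: lincomb_in_F2n)
  then have "linmap u (vadd (M i) (lincomb M c)) = vadd (linmap u (M i)) (linmap u (lincomb M c))"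
    by (rule linmap_vadd[rotated])
  then show ?case using insert by (simp add: lincomb_insert)
qed

lemma span_seq_linmap:
  assumes "\<And>i. i < r' \<Longrightarrow> M i \<in> F2n r"
  shows "span_seq (\<lambda>i. linmap u (M i)) r' = linmap u ` span_seq M r'"
proof -
  have "\<And>c. c \<in> Pow {..<r'} \<Longrightarrow> lincomb (\<lambda>i. linmap u (M i)) c = linmap u (lincomb M c)"
    using assms by (intro lincomb_linmap) (auto intro: finite_subset)
  then show ?thesis unfolding span_seq_def image_image by (auto intro: image_cong)
qed

lemma indep_seq_linmap_iff:
  assumes "indep_seq u r" "\<And>i. i < r' \<Longrightarrow> M i \<in> F2n r"
  shows "indep_seq (\<lambda>i. linmap u (M i)) r' \<longleftrightarrow> indep_seq M r'"
proof -
  let ?P = "Pow {..<r'}"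
  have fin: "finite c" "\<And>i. i \<in> c \<Longrightarrow> M i \<in> F2n r" if "c \<in> ?P" for c
  proof -
    show "finite c" using that finite_lessThan[of r'] by (blast intro: finite_subset)
    show "\<And>i. i \<in> c \<Longrightarrow> M i \<in> F2n r" using that assms(2) by auto
  qed
  have "lincomb (\<lambda>i. linmap u (M i)) c = (linmap u \<circ> lincomb M) c" if "c \<in> ?P" for c
    using lincomb_linmap[OF fin[OF that]] by simp
  then have "inj_on (lincomb (\<lambda>i. linmap u (M i))) ?P \<longleftrightarrow> inj_on (linmap u \<circ> lincomb M) ?P"
    by (rule inj_on_cong)
  also have "\<dots> \<longleftrightarrow> inj_on (lincomb M) ?P"
  proof
    assume "inj_on (linmap u \<circ> lincomb M) ?P"
    then show "inj_on (lincomb M) ?P" by (rule inj_on_imageI2)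
  next
    assume inj: "inj_on (lincomb M) ?P"
    have "lincomb M ` ?P \<subseteq> F2n r"
    proof
      fix y assume "y \<in> lincomb M ` ?P"
      then obtain c where "c \<in> ?P" "y = lincomb M c" by blast
      then show "y \<in> F2n r" using lincomb_in_F2n[OF fin] by simp
    qed
    with inj_on_linmap[OF assms(1)] have "inj_on (linmap u) (lincomb M ` ?P)" by (rule inj_on_subset)
    with inj show "inj_on (linmap u \<circ> lincomb M) ?P" by (rule comp_inj_on)
  qed
  finally show ?thesis unfolding indep_seq_def .
qed

lemma inj_on_frame_map: "\<sigma> \<in> frames m r \<Longrightarrow> inj_on (frame_map \<sigma>) (F2n r)"
proof -
  assume "\<sigma> \<in> frames m r"
  then have "inj_on (linmap (snd \<sigma>)) (F2n r)"
    using inj_on_linmap by (simp add: frames_def indep_seqs_def mem_Times_iff)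
  then show ?thesis unfolding inj_on_def frame_map_def by simp
qed

lemma linmap_in_F2n: "u \<in> indep_seqs (F2n m) r \<Longrightarrow> b \<in> F2n r \<Longrightarrow> linmap u b \<in> F2n m"
  using linmap_image_F2n span_seq_subset_F2n by blast

lemma frame_map_image_F2n: "\<sigma> \<in> frames m r \<Longrightarrow> frame_map \<sigma> ` F2n r = frame_flat r \<sigma>"
  by (simp add: frame_flat_def frame_map_def linmap_image_F2n[symmetric] image_image)

lemma frame_map_in_F2n: "\<sigma> \<in> frames m r \<Longrightarrow> b \<in> F2n r \<Longrightarrow> frame_map \<sigma> b \<in> F2n m"
  unfolding frame_map_def frames_def mem_Times_iff by (blast intro: vadd_in_F2n linmap_in_F2n)

lemma frame_comp_in_frames:
  assumes "\<sigma> \<in> frames m r" "\<mu> \<in> frames r r'"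
  shows "frame_comp \<sigma> \<mu> \<in> frames m r'"
proof -
  obtain x u where \<sigma>: "\<sigma> = (x, u)" "u \<in> indep_seqs (F2n m) r" using assms(1) by (auto simp: frames_def)
  obtain a M where \<mu>: "\<mu> = (a, M)" "a \<in> F2n r" "M \<in> indep_seqs (F2n r) r'"
    using assms(2) by (auto simp: frames_def)
  have MF: "\<And>i. i < r' \<Longrightarrow> M i \<in> F2n r" using \<mu>(3) by (simp add: indep_seqs_def)
  have "indep_seq (\<lambda>i. linmap u (M i)) r'"
    using indep_seq_linmap_iff[OF _ MF, of u] \<sigma>(2) \<mu>(3) by (simp add: indep_seqs_def)
  moreover have "linmap u (M i) \<in> F2n m" if "i < r'" for i
    using linmap_in_F2n[OF \<sigma>(2) MF[OF that]] .
  moreover have "linmap u (M i) = vzero" if "i \<ge> r'" for i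
    using \<mu>(3) that by (simp add: indep_seqs_def linmap_def vzero_def)
  ultimately have "snd (frame_comp \<sigma> \<mu>) \<in> indep_seqs (F2n m) r'"
    using \<sigma> \<mu> by (simp add: frame_comp_def indep_seqs_def)
  moreover have "fst (frame_comp \<sigma> \<mu>) \<in> F2n m"
    using frame_map_in_F2n[OF assms(1) \<mu>(2)] \<mu>(1) by (simp add: frame_comp_def)
  ultimately show ?thesis by (simp add: frames_def mem_Times_iff)
qed

lemma frame_flat_subset_F2n:
  assumes "\<mu> \<in> frames r r''" "r' \<le> r''"
  shows "frame_flat r' \<mu> \<subseteq> F2n r"
proof -
  obtain a M where \<mu>: "\<mu> = (a, M)" "a \<in> F2n r" "M \<in> indep_seqs (F2n r) r''"
    using assms(1) by (auto simp: frames_def)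
  have "span_seq M r' \<subseteq> F2n r"
    using \<mu>(3) assms(2) by (intro span_seq_subset[OF subspace2_F2n]) (simp add: indep_seqs_def)
  then show ?thesis using \<mu> vadd_in_F2n unfolding frame_flat_def by auto
qed

lemma frame_flat_frame_comp:
  assumes "\<sigma> \<in> frames m r" "\<mu> \<in> frames r r''" "r' \<le> r''"
  shows "frame_flat r' (frame_comp \<sigma> \<mu>) = frame_map \<sigma> ` frame_flat r' \<mu>"
proof -
  obtain x u where \<sigma>: "\<sigma> = (x, u)" using prod.exhaust by blast
  obtain a M where \<mu>: "\<mu> = (a, M)" "a \<in> F2n r" "M \<in> indep_seqs (F2n r) r''"
    using assms(2) by (auto simp: frames_def)
  have MF: "\<And>i. i < r' \<Longrightarrow> M i \<in> F2n r" using \<mu>(3) assms(3) by (simp add: indep_seqs_def)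
  have "span_seq M r' \<subseteq> F2n r" by (rule span_seq_subset[OF subspace2_F2n MF])
  then have "vadd (vadd x (linmap u a)) (linmap u y) = vadd x (linmap u (vadd a y))" if "y \<in> span_seq M r'" for y
    using that \<mu>(2) by (auto simp: linmap_vadd vadd_assoc)
  then have "vadd (vadd x (linmap u a)) ` linmap u ` span_seq M r' = (\<lambda>b. vadd x (linmap u b)) ` vadd a ` span_seq M r'"
    unfolding image_image by (rule image_cong[OF refl])
  then show ?thesis
    using \<sigma> \<mu> span_seq_linmap[OF MF] by (simp add: frame_comp_def frame_flat_def frame_map_def)
qed

lemma card_image_Int:
  assumes "inj_on g X" "F \<subseteq> X"
  shows "card (g ` F \<inter> A) = card (F \<inter> {b\<in>X. g b \<in> A})"
proof -
  have "g ` F \<inter> A = g ` (F \<inter> {b\<in>X. g b \<in> A})" using assms(2) by blast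
  moreover have "inj_on g (F \<inter> {b\<in>X. g b \<in> A})" using assms by (blast intro: inj_on_subset)
  ultimately show ?thesis by (simp add: card_image)
qed

lemma card_frame_flat_frame_comp_Int:
  assumes "\<sigma> \<in> frames m r" "\<mu> \<in> frames r r''" "r' \<le> r''"
  shows "card (frame_flat r' (frame_comp \<sigma> \<mu>) \<inter> A) =
    card (frame_flat r' \<mu> \<inter> {b\<in>F2n r. frame_map \<sigma> b \<in> A})"
  unfolding frame_flat_frame_comp[OF assms]
  by (rule card_image_Int[OF inj_on_frame_map[OF assms(1)] frame_flat_subset_F2n[OF assms(2,3)]])

lemma inj_on_frame_comp:
  assumes "\<sigma> \<in> frames m r"
  shows "inj_on (frame_comp \<sigma>) (frames r r')"
proof (rule inj_onI)
  fix \<mu> \<mu>' assume \<mu>\<mu>': "\<mu> \<in> frames r r'" "\<mu>' \<in> frames r r'" "frame_comp \<sigma> \<mu> = frame_comp \<sigma> \<mu>'"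
  have inj: "inj_on (linmap (snd \<sigma>)) (F2n r)"
    using assms inj_on_linmap by (auto simp: frames_def indep_seqs_def)
  obtain b M where \<mu>: "\<mu> = (b, M)" "b \<in> F2n r" "M \<in> indep_seqs (F2n r) r'"
    using \<mu>\<mu>'(1) by (auto simp: frames_def)
  obtain b' M' where \<mu>': "\<mu>' = (b', M')" "b' \<in> F2n r" "M' \<in> indep_seqs (F2n r) r'"
    using \<mu>\<mu>'(2) by (auto simp: frames_def)
  have fst_eq: "frame_map \<sigma> b = frame_map \<sigma> b'"
    and snd_eq: "(\<lambda>i. linmap (snd \<sigma>) (M i)) = (\<lambda>i. linmap (snd \<sigma>) (M' i))"
    using \<mu>\<mu>'(3) \<mu> \<mu>' by (simp_all add: frame_comp_def)
  have M: "linmap (snd \<sigma>) (M i) = linmap (snd \<sigma>) (M' i)" for i using fun_cong[OF snd_eq, of i] by simp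
  have "linmap (snd \<sigma>) b = linmap (snd \<sigma>) b'" using fst_eq by (simp add: frame_map_def)
  then have "b = b'" using inj \<mu>(2) \<mu>'(2) by (simp add: inj_on_eq_iff)
  moreover have "M i = M' i" for i
  proof (cases "i < r'")
    case True
    then show ?thesis using M[of i] inj \<mu>(3) \<mu>'(3) by (simp add: inj_on_eq_iff indep_seqs_def)
  next
    case False
    then show ?thesis using \<mu>(3) \<mu>'(3) by (simp add: indep_seqs_def)
  qed
  ultimately show "\<mu> = \<mu>'" using \<mu> \<mu>' by auto
qed

lemma inj_on_frame_comp_left:
  assumes "\<mu> \<in> frames n n"
  shows "inj_on (\<lambda>\<sigma>. frame_comp \<sigma> \<mu>) (frames m n)"
proof (rule inj_onI)
  fix \<sigma> \<sigma>' assume \<sigma>\<sigma>': "\<sigma> \<in> frames m n" "\<sigma>' \<in> frames m n" "frame_comp \<sigma> \<mu> = frame_comp \<sigma>' \<mu>"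
  obtain x u where \<sigma>: "\<sigma> = (x, u)" "u \<in> indep_seqs (F2n m) n" using \<sigma>\<sigma>'(1) by (auto simp: frames_def)
  obtain x' u' where \<sigma>': "\<sigma>' = (x', u')" "u' \<in> indep_seqs (F2n m) n" using \<sigma>\<sigma>'(2) by (auto simp: frames_def)
  obtain a M where \<mu>: "\<mu> = (a, M)" "M \<in> indep_seqs (F2n n) n" using assms by (auto simp: frames_def)
  have MF: "\<And>i. i < n \<Longrightarrow> M i \<in> F2n n" using \<mu>(2) by (simp add: indep_seqs_def)
  have x: "vadd x (linmap u a) = vadd x' (linmap u' a)" and M: "\<And>i. linmap u (M i) = linmap u' (M i)"
    using \<sigma>\<sigma>'(3) \<sigma> \<sigma>' \<mu> by (simp_all add: frame_comp_def frame_map_def fun_eq_iff)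
  have "u j = u' j" for j
  proof (cases "j < n")
    case True
    text \<open>The columns of \<open>M\<close> span \<open>\<bbbF>\<^sub>2\<^sup>n\<close>, so \<open>linmap u\<close> is determined on every unit vector.\<close>
    have "span_seq M n = F2n n"
      using span_seq_eq_of_indep_seqs[OF subspace2_F2n finite_F2n card_F2n \<mu>(2)] .
    then obtain c where c: "c \<subseteq> {..<n}" "unit_vec j = lincomb M c"
      using unit_vec_in_F2n[OF True] by (auto simp: span_seq_def)
    have "finite c" using c(1) finite_subset by blast
    moreover have "\<And>i. i \<in> c \<Longrightarrow> M i \<in> F2n n" using c(1) MF by auto
    ultimately have "linmap w (unit_vec j) = lincomb (\<lambda>i. linmap w (M i)) c" for w
      using lincomb_linmap[of c M n w] c(2) by simp
    then show ?thesis using M by (simp add: linmap_unit_vec)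
  next
    case False
    then show ?thesis using \<sigma>(2) \<sigma>'(2) by (simp add: indep_seqs_def)
  qed
  then have "u = u'" by blast
  then show "\<sigma> = \<sigma>'" using x \<sigma> \<sigma>' by simp
qed

lemma frame_flat_full:
  assumes "\<mu> \<in> frames N N"
  shows "frame_flat N \<mu> = F2n N"
proof -
  have "frame_map \<mu> ` F2n N \<subseteq> F2n N" using frame_map_in_F2n[OF assms] by blast
  moreover have "card (frame_map \<mu> ` F2n N) = card (F2n N)"
    by (rule card_image[OF inj_on_frame_map[OF assms]])
  ultimately show ?thesis
    using card_subset_eq[OF finite_F2n] frame_map_image_F2n[OF assms] by simp
qed

lemma indep_seqs_image_linmap_obtain:
  assumes u: "indep_seq u N" and w: "w \<in> indep_seqs (linmap u ` F2n N) N"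
  obtains M where "M \<in> indep_seqs (F2n N) N" "(\<lambda>i. linmap u (M i)) = w"
proof -
  define M where "M = (\<lambda>i. if i < N then inv_into (F2n N) (linmap u) (w i) else vzero)"
  have wi: "\<And>i. i < N \<Longrightarrow> w i \<in> linmap u ` F2n N" using w by (simp add: indep_seqs_def)
  have MF: "\<And>i. i < N \<Longrightarrow> M i \<in> F2n N" using wi by (simp add: M_def inv_into_into)
  have linmap_M: "(\<lambda>i. linmap u (M i)) = w"
  proof
    fix i show "linmap u (M i) = w i"
    proof (cases "i < N")
      case True
      then show ?thesis using wi[OF True] by (simp add: M_def f_inv_into_f)
    next
      case False
      then show ?thesis using w by (simp add: M_def indep_seqs_def linmap_def vzero_def)
    qed
  qed
  have "indep_seq (\<lambda>i. linmap u (M i)) N \<longleftrightarrow> indep_seq M N" by (rule indep_seq_linmap_iff[OF u MF])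
  then have "indep_seq M N" using linmap_M w by (simp add: indep_seqs_def)
  then have "M \<in> indep_seqs (F2n N) N" using MF by (simp add: indep_seqs_def M_def)
  then show ?thesis using linmap_M by (rule that)
qed

lemma frame_fibre_eq_image_frame_comp:
  assumes \<sigma>: "\<sigma> \<in> frames n N"
  shows "{\<tau>\<in>frames n N. frame_flat N \<tau> = frame_flat N \<sigma>} = frame_comp \<sigma> ` frames N N"
proof
  show "frame_comp \<sigma> ` frames N N \<subseteq> {\<tau>\<in>frames n N. frame_flat N \<tau> = frame_flat N \<sigma>}"
  proof
    fix \<tau> assume "\<tau> \<in> frame_comp \<sigma> ` frames N N"
    then obtain \<mu> where \<mu>: "\<mu> \<in> frames N N" "\<tau> = frame_comp \<sigma> \<mu>" by blast
    have "frame_flat N \<tau> = frame_map \<sigma> ` F2n N"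
      using frame_flat_frame_comp[OF \<sigma> \<mu>(1) order_refl] frame_flat_full[OF \<mu>(1)] \<mu>(2) by simp
    then show "\<tau> \<in> {\<tau>\<in>frames n N. frame_flat N \<tau> = frame_flat N \<sigma>}"
      using frame_comp_in_frames[OF \<sigma> \<mu>(1)] \<mu>(2) frame_map_image_F2n[OF \<sigma>] by simp
  qed
next
  obtain x u where xu: "\<sigma> = (x, u)" by fastforce
  have u: "indep_seq u N" using \<sigma> xu by (simp add: frames_def indep_seqs_def)
  have fibre: "{\<tau>\<in>frames n N. frame_flat N \<tau> = frame_flat N \<sigma>} =
      frame_flat N \<sigma> \<times> indep_seqs (span_seq u N) N"
    using frame_fibre_eq[of x u n N] \<sigma> xu by simp
  show "{\<tau>\<in>frames n N. frame_flat N \<tau> = frame_flat N \<sigma>} \<subseteq> frame_comp \<sigma> ` frames N N"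
  proof
    fix \<tau> assume "\<tau> \<in> {\<tau>\<in>frames n N. frame_flat N \<tau> = frame_flat N \<sigma>}"
    then have "\<tau> \<in> frame_flat N \<sigma> \<times> indep_seqs (span_seq u N) N" unfolding fibre .
    then obtain y w where yw: "\<tau> = (y, w)" "y \<in> frame_map \<sigma> ` F2n N" "w \<in> indep_seqs (linmap u ` F2n N) N"
      using frame_map_image_F2n[OF \<sigma>] linmap_image_F2n[of u N] by auto
    obtain a where a: "a \<in> F2n N" "y = frame_map \<sigma> a" using yw(2) by blast
    obtain M where M: "M \<in> indep_seqs (F2n N) N" "(\<lambda>i. linmap u (M i)) = w"
      using indep_seqs_image_linmap_obtain[OF u yw(3)] .
    have "(a, M) \<in> frames N N" using M a by (simp add: frames_def)
    moreover have "frame_comp \<sigma> (a, M) = \<tau>" using xu yw(1) a M(2) by (simp add: frame_comp_def)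
    ultimately show "\<tau> \<in> frame_comp \<sigma> ` frames N N" by force
  qed
qed

section \<open>The Walsh transform and a 2-adic uncertainty principle\<close>

definition walsh :: "nat \<Rightarrow> ((nat \<Rightarrow> bool) \<Rightarrow> int) \<Rightarrow> (nat \<Rightarrow> bool) \<Rightarrow> int" where
  "walsh N f \<chi> = (\<Sum>x\<in>F2n N. f x * (-1) ^ card {i. \<chi> i \<and> x i})"

definition walsh_supp :: "nat \<Rightarrow> ((nat \<Rightarrow> bool) \<Rightarrow> int) \<Rightarrow> (nat \<Rightarrow> bool) set" where
  "walsh_supp N f = {\<psi>\<in>F2n N. walsh N f \<psi> \<noteq> 0}"

lemma finite_walsh_supp[simp]: "finite (walsh_supp N f)" by (simp add: walsh_supp_def)

lemma not_F2n_at_dim: "x \<in> F2n N \<Longrightarrow> \<not> x N" by (simp add: F2n_def)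

lemma F2n_Suc: "F2n (Suc N) = F2n N \<union> (\<lambda>x. x(N := True)) ` F2n N"
proof
  show "F2n (Suc N) \<subseteq> F2n N \<union> (\<lambda>x. x(N := True)) ` F2n N"
  proof
    fix x assume x: "x \<in> F2n (Suc N)"
    show "x \<in> F2n N \<union> (\<lambda>x. x(N := True)) ` F2n N"
    proof (cases "x N")
      case True
      then have "x = (x(N := False))(N := True)" "x(N := False) \<in> F2n N"
        using x by (auto simp: F2n_def fun_eq_iff)
      then show ?thesis by blast
    next
      case False
      have "\<not> x i" if "N \<le> i" for i
        using that x False by (cases "i = N") (auto simp: F2n_def)
      then have "x \<in> F2n N" by (simp add: F2n_def)
      then show ?thesis by blast
    qed
  qed
  show "F2n N \<union> (\<lambda>x. x(N := True)) ` F2n N \<subseteq> F2n (Suc N)" by (auto simp: F2n_def)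
qed

lemma F2n_Suc_cases:
  "\<chi> \<in> F2n (Suc N) \<Longrightarrow> \<chi>(N := False) \<in> F2n N \<and> (\<chi> = \<chi>(N := False) \<or> \<chi> = (\<chi>(N := False))(N := True))"
  by (auto simp: F2n_def fun_eq_iff le_Suc_eq)

lemma inj_on_upd_True_F2n: "inj_on (\<lambda>x. x(N := True)) (F2n N)"
proof (rule inj_onI)
  fix x y assume "x \<in> F2n N" "y \<in> F2n N" "x(N := True) = y(N := True)"
  then have "(x(N := True))(N := False) = (y(N := True))(N := False)" "\<not> x N" "\<not> y N"
    using not_F2n_at_dim by auto
  then show "x = y" by (auto simp: fun_eq_iff split: if_splits)
qed

lemma F2n_Int_upd_True_F2n: "F2n N \<inter> (\<lambda>x. x(N := True)) ` F2n N = {}"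
  using not_F2n_at_dim by fastforce

lemma sum_F2n_Suc:
  "(\<Sum>x\<in>F2n (Suc N). F x) = (\<Sum>x\<in>F2n N. F x) + (\<Sum>x\<in>F2n N. F (x(N := True)))"
proof -
  have "(\<Sum>x\<in>F2n (Suc N). F x) = (\<Sum>x\<in>F2n N. F x) + (\<Sum>x\<in>(\<lambda>x. x(N := True)) ` F2n N. F x)"
    unfolding F2n_Suc by (rule sum.union_disjoint) (use F2n_Int_upd_True_F2n in auto)
  also have "(\<Sum>x\<in>(\<lambda>x. x(N := True)) ` F2n N. F x) = (\<Sum>x\<in>F2n N. F (x(N := True)))"
    by (rule sum.reindex[OF inj_on_upd_True_F2n, unfolded comp_def])
  finally show ?thesis .
qed

lemma walsh_add: "walsh N (\<lambda>x. a x + b x) \<chi> = walsh N a \<chi> + walsh N b \<chi>"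
  unfolding walsh_def by (simp add: sum.distrib algebra_simps)

lemma walsh_diff: "walsh N (\<lambda>x. a x - b x) \<chi> = walsh N a \<chi> - walsh N b \<chi>"
  unfolding walsh_def by (simp add: sum_subtractf algebra_simps)

lemma walsh_Suc_low:
  assumes "\<chi> \<in> F2n N"
  shows "walsh (Suc N) f \<chi> = walsh N (\<lambda>x. f x + f (x(N := True))) \<chi>"
proof -
  have "{i. \<chi> i \<and> (x(N := True)) i} = {i. \<chi> i \<and> x i}" for x
    using assms not_F2n_at_dim by auto
  then show ?thesis unfolding walsh_def sum_F2n_Suc by (simp add: sum.distrib algebra_simps)
qed

lemma walsh_Suc_high:
  assumes "\<chi> \<in> F2n N"
  shows "walsh (Suc N) f (\<chi>(N := True)) = walsh N (\<lambda>x. f x - f (x(N := True))) \<chi>"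
proof -
  have low: "{i. (\<chi>(N := True)) i \<and> x i} = {i. \<chi> i \<and> x i}" if "x \<in> F2n N" for x
    using that not_F2n_at_dim by auto
  have high: "card {i. (\<chi>(N := True)) i \<and> (x(N := True)) i} = Suc (card {i. \<chi> i \<and> x i})"
    if "x \<in> F2n N" for x
  proof -
    have "{i. (\<chi>(N := True)) i \<and> (x(N := True)) i} = insert N {i. \<chi> i \<and> x i}" by auto
    moreover have "finite {i. \<chi> i \<and> x i}" using finite_support_F2n[OF that] by (rule rev_finite_subset) auto
    moreover have "N \<notin> {i. \<chi> i \<and> x i}" using that not_F2n_at_dim by auto
    ultimately show ?thesis by simp
  qed
  have "walsh (Suc N) f (\<chi>(N := True)) = (\<Sum>x\<in>F2n N. f x * (-1) ^ card {i. \<chi> i \<and> x i})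
     + (\<Sum>x\<in>F2n N. f (x(N := True)) * (-1) ^ Suc (card {i. \<chi> i \<and> x i}))"
    unfolding walsh_def sum_F2n_Suc
    by (intro arg_cong2[where f="(+)"] sum.cong refl) (simp_all only: low high)
  also have "\<dots> = walsh N (\<lambda>x. f x - f (x(N := True))) \<chi>"
    unfolding walsh_def by (simp add: sum_subtractf sum_negf algebra_simps)
  finally show ?thesis .
qed

lemma card_walsh_supp_Suc:
  "card (walsh_supp (Suc N) f) =
    card (walsh_supp N (\<lambda>x. f x + f (x(N := True)))) + card (walsh_supp N (\<lambda>x. f x - f (x(N := True))))"
proof -
  let ?g = "\<lambda>x. f x + f (x(N := True))" and ?h = "\<lambda>x. f x - f (x(N := True))"
  let ?up = "\<lambda>x. x(N := True)"
  have "walsh_supp (Suc N) f = walsh_supp N ?g \<union> ?up ` walsh_supp N ?h"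
  proof
    show "walsh_supp (Suc N) f \<subseteq> walsh_supp N ?g \<union> ?up ` walsh_supp N ?h"
    proof
      fix \<chi> assume \<chi>: "\<chi> \<in> walsh_supp (Suc N) f"
      then have \<chi>': "\<chi>(N := False) \<in> F2n N" "\<chi> = \<chi>(N := False) \<or> \<chi> = ?up (\<chi>(N := False))"
        using F2n_Suc_cases by (auto simp: walsh_supp_def)
      from \<chi>'(2) show "\<chi> \<in> walsh_supp N ?g \<union> ?up ` walsh_supp N ?h"
      proof
        assume "\<chi> = \<chi>(N := False)"
        then show ?thesis using \<chi> \<chi>'(1) walsh_Suc_low[OF \<chi>'(1), of f] by (simp add: walsh_supp_def)
      next
        assume up: "\<chi> = ?up (\<chi>(N := False))"
        then have "\<chi>(N := False) \<in> walsh_supp N ?h"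
          using \<chi> \<chi>'(1) walsh_Suc_high[OF \<chi>'(1), of f] by (simp add: walsh_supp_def)
        then show ?thesis using up by blast
      qed
    qed
    show "walsh_supp N ?g \<union> ?up ` walsh_supp N ?h \<subseteq> walsh_supp (Suc N) f"
      using walsh_Suc_low walsh_Suc_high by (auto simp: walsh_supp_def F2n_Suc)
  qed
  moreover have "walsh_supp N ?g \<inter> ?up ` walsh_supp N ?h = {}"
    using F2n_Int_upd_True_F2n[of N] by (auto simp: walsh_supp_def)
  moreover have "inj_on ?up (walsh_supp N ?h)"
    using inj_on_upd_True_F2n by (rule inj_on_subset) (auto simp: walsh_supp_def)
  ultimately show ?thesis by (simp add: card_Un_disjoint card_image)
qed

lemma walsh_Suc_cases:
  assumes "\<chi> \<in> F2n (Suc N)"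
  obtains \<chi>' where "\<chi>' \<in> F2n N"
    "walsh (Suc N) f \<chi> = walsh N (\<lambda>x. f x + f (x(N := True))) \<chi>' \<or>
     walsh (Suc N) f \<chi> = walsh N (\<lambda>x. f x - f (x(N := True))) \<chi>'"
proof -
  let ?\<chi>' = "\<chi>(N := False)"
  have "?\<chi>' \<in> F2n N" and "\<chi> = ?\<chi>' \<or> \<chi> = ?\<chi>'(N := True)"
    using F2n_Suc_cases[OF assms] by blast+
  with walsh_Suc_low[of ?\<chi>' N f] walsh_Suc_high[of ?\<chi>' N f] show ?thesis
    by (metis that)
qed

lemma walsh_supp_subset_sum_diff:
  "walsh_supp N a \<union> walsh_supp N b \<subseteq> walsh_supp N (\<lambda>x. a x + b x) \<union> walsh_supp N (\<lambda>x. a x - b x)"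
  by (auto simp: walsh_supp_def walsh_add walsh_diff)

lemma not_dvd_half:
  fixes x y z :: int
  assumes "2 ^ (w + 1) dvd y" "\<not> 2 ^ (w + 1) dvd x" "2 * z = x + y \<or> 2 * z = y - x"
  shows "\<not> 2 ^ w dvd z"
proof
  assume "2 ^ w dvd z"
  then have "2 ^ (w + 1) dvd 2 * z" by simp
  moreover have "x = 2 * z - y \<or> x = y - 2 * z" using assms(3) by auto
  ultimately have "2 ^ (w + 1) dvd x" using assms(1) by (auto intro: dvd_diff)
  with assms(2) show False ..
qed

text \<open>Writing \<open>f\<^sub>1 x = f (x + e\<^sub>N)\<close>, the Walsh coefficients of \<open>f\<close> on \<open>\<bbbF>\<^sub>2\<^sup>N\<^sup>+\<^sup>1\<close> are those of
  \<open>f + f\<^sub>1\<close> and \<open>f - f\<^sub>1\<close> on \<open>\<bbbF>\<^sub>2\<^sup>N\<close>.  A coefficient not divisible by \<open>2\<^sup>w\<^sup>+\<^sup>1\<close> is therefore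
  inherited by both of them, or else by \<open>(f \<pm> f\<^sub>1) / 2\<close> with \<open>2\<^sup>w\<close> in place of \<open>2\<^sup>w\<^sup>+\<^sup>1\<close>.\<close>

lemma walsh_Suc_not_dvd_cases:
  fixes f :: "(nat \<Rightarrow> bool) \<Rightarrow> int"
  assumes "\<chi> \<in> F2n (Suc N)" "\<not> 2 ^ (w + 1) dvd walsh (Suc N) f \<chi>"
  obtains (both) \<psi> \<psi>' where "\<psi> \<in> F2n N" "\<not> 2 ^ (w + 1) dvd walsh N (\<lambda>x. f x + f (x(N := True))) \<psi>"
      "\<psi>' \<in> F2n N" "\<not> 2 ^ (w + 1) dvd walsh N (\<lambda>x. f x - f (x(N := True))) \<psi>'"
    | (half) e \<psi> where "e = f \<or> e = (\<lambda>x. f (x(N := True)))" "\<psi> \<in> F2n N" "\<not> 2 ^ w dvd walsh N e \<psi>"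
proof -
  let ?f1 = "\<lambda>x. f (x(N := True))"
  let ?g = "\<lambda>x. f x + ?f1 x" and ?h = "\<lambda>x. f x - ?f1 x"
  obtain \<chi>' where \<chi>': "\<chi>' \<in> F2n N" and coeff: "walsh (Suc N) f \<chi> = walsh N ?g \<chi>' \<or> walsh (Suc N) f \<chi> = walsh N ?h \<chi>'"
    using walsh_Suc_cases[OF assms(1)] .
  have g: "walsh N ?g \<chi>' = walsh N f \<chi>' + walsh N ?f1 \<chi>'" by (rule walsh_add)
  have h: "walsh N ?h \<chi>' = walsh N f \<chi>' - walsh N ?f1 \<chi>'" by (rule walsh_diff)
  consider "\<exists>\<psi>\<in>F2n N. \<not> 2 ^ (w + 1) dvd walsh N ?g \<psi>" "\<exists>\<psi>\<in>F2n N. \<not> 2 ^ (w + 1) dvd walsh N ?h \<psi>"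
    | (h_dvd) "\<forall>\<psi>\<in>F2n N. 2 ^ (w + 1) dvd walsh N ?h \<psi>"
    | (g_dvd) "\<forall>\<psi>\<in>F2n N. 2 ^ (w + 1) dvd walsh N ?g \<psi>"
    by blast
  then show ?thesis
  proof cases
    case 1
    then show ?thesis using both by blast
  next
    case h_dvd
    then have y: "2 ^ (w + 1) dvd walsh N ?h \<chi>'" and x: "\<not> 2 ^ (w + 1) dvd walsh N ?g \<chi>'"
      using \<chi>' coeff assms(2) by auto
    have "\<not> 2 ^ w dvd walsh N f \<chi>'" by (rule not_dvd_half[OF y x]) (simp add: g h)
    then show ?thesis using half \<chi>' by blast
  next
    case g_dvd
    then have y: "2 ^ (w + 1) dvd walsh N ?g \<chi>'" and x: "\<not> 2 ^ (w + 1) dvd walsh N ?h \<chi>'"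
      using \<chi>' coeff assms(2) by auto
    have "\<not> 2 ^ w dvd walsh N ?f1 \<chi>'" by (rule not_dvd_half[OF y x]) (simp add: g h)
    then show ?thesis using half \<chi>' by blast
  qed
qed

lemma card_walsh_supp_ge:
  "\<chi> \<in> F2n N \<Longrightarrow> \<not> (2::int) ^ (w + 1) dvd walsh N f \<chi> \<Longrightarrow> 2 ^ (N - w) \<le> card (walsh_supp N f)"
proof (induction N arbitrary: f w \<chi>)
  case 0
  then have "\<chi> \<in> walsh_supp 0 f" by (auto simp: walsh_supp_def)
  then have "card (walsh_supp 0 f) > 0" by (auto simp: card_gt_0_iff)
  then show ?case by simp
next
  case (Suc N)
  let ?f1 = "\<lambda>x. f (x(N := True))"
  let ?g = "\<lambda>x. f x + ?f1 x" and ?h = "\<lambda>x. f x - ?f1 x"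
  have card_Suc: "card (walsh_supp (Suc N) f) = card (walsh_supp N ?g) + card (walsh_supp N ?h)"
    by (rule card_walsh_supp_Suc)
  from Suc.prems show ?case
  proof (cases rule: walsh_Suc_not_dvd_cases)
    case (both \<psi> \<psi>')
    then have "2 ^ (N - w) \<le> card (walsh_supp N ?g)" "2 ^ (N - w) \<le> card (walsh_supp N ?h)"
      using Suc.IH by blast+
    moreover have "(2::nat) ^ (Suc N - w) \<le> 2 ^ (N - w) + 2 ^ (N - w)"
      by (cases "w \<le> N") (simp_all add: Suc_diff_le)
    ultimately show ?thesis using card_Suc by linarith
  next
    case (half e \<psi>)
    have w: "w \<ge> 1" using half(3) by (cases w) auto
    then have "\<not> (2::int) ^ ((w - 1) + 1) dvd walsh N e \<psi>" using half(3) by simp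
    then have "2 ^ (N - (w - 1)) \<le> card (walsh_supp N e)" by (rule Suc.IH[OF half(2)])
    also have "\<dots> \<le> card (walsh_supp N ?g \<union> walsh_supp N ?h)"
    proof (rule card_mono)
      show "walsh_supp N e \<subseteq> walsh_supp N ?g \<union> walsh_supp N ?h"
        using walsh_supp_subset_sum_diff[of N f ?f1] half(1) by blast
    qed simp
    also have "\<dots> \<le> card (walsh_supp (Suc N) f)" unfolding card_Suc by (rule card_Un_le)
    finally show ?thesis using w by (simp add: Suc_diff_le)
  qed
qed

section \<open>Counting hyperplanes of \<open>\<bbbF>\<^sub>2\<^sup>D\<^sup>+\<^sup>1\<close> through a set\<close>

definition dot :: "(nat \<Rightarrow> bool) \<Rightarrow> (nat \<Rightarrow> bool) \<Rightarrow> bool" where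
  "dot \<chi> x = odd (card {i. \<chi> i \<and> x i})"

definition dot_ker :: "nat \<Rightarrow> (nat \<Rightarrow> bool) \<Rightarrow> (nat \<Rightarrow> bool) set" where
  "dot_ker N \<chi> = {x\<in>F2n N. \<not> dot \<chi> x}"

lemma finite_common_support: "x \<in> F2n N \<Longrightarrow> finite {i. \<chi> i \<and> x i}"
  using finite_support_F2n by (rule rev_finite_subset) auto

lemma dot_vadd: "x \<in> F2n N \<Longrightarrow> y \<in> F2n N \<Longrightarrow> dot \<chi> (vadd x y) = (dot \<chi> x \<noteq> dot \<chi> y)"
proof -
  assume xy: "x \<in> F2n N" "y \<in> F2n N"
  have "{i. \<chi> i \<and> vadd x y i} = sym_diff {i. \<chi> i \<and> x i} {i. \<chi> i \<and> y i}"
    by (auto simp: vadd_def)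
  then show ?thesis
    unfolding dot_def using odd_card_sym_diff[OF finite_common_support[OF xy(1)] finite_common_support[OF xy(2)]]
    by simp
qed

lemma dot_unit_vec: "dot \<chi> (unit_vec m) = \<chi> m"
proof -
  have "{i. \<chi> i \<and> unit_vec m i} = (if \<chi> m then {m} else {})" by (auto simp: unit_vec_def)
  then show ?thesis by (simp add: dot_def)
qed

lemma dot_ker_subset_F2n: "dot_ker N \<chi> \<subseteq> F2n N" by (auto simp: dot_ker_def)

lemma finite_dot_ker[simp]: "finite (dot_ker N \<chi>)"
  by (rule finite_subset[OF dot_ker_subset_F2n finite_F2n])

lemma subspace2_dot_ker: "subspace2 (dot_ker N \<chi>)"
  unfolding subspace2_def
proof (intro conjI ballI)
  have "\<not> dot \<chi> vzero" by (simp add: dot_def vzero_def)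
  then show "vzero \<in> dot_ker N \<chi>" by (simp add: dot_ker_def)
  fix x y assume "x \<in> dot_ker N \<chi>" "y \<in> dot_ker N \<chi>"
  then show "vadd x y \<in> dot_ker N \<chi>" using dot_vadd vadd_in_F2n by (auto simp: dot_ker_def)
qed

lemma vadd_image_dot_ker:
  assumes "a \<in> F2n N"
  shows "vadd a ` dot_ker N \<chi> = {z\<in>F2n N. dot \<chi> z = dot \<chi> a}"
proof
  show "vadd a ` dot_ker N \<chi> \<subseteq> {z\<in>F2n N. dot \<chi> z = dot \<chi> a}"
    using assms dot_vadd vadd_in_F2n by (auto simp: dot_ker_def)
  show "{z\<in>F2n N. dot \<chi> z = dot \<chi> a} \<subseteq> vadd a ` dot_ker N \<chi>"
  proof
    fix z assume "z \<in> {z\<in>F2n N. dot \<chi> z = dot \<chi> a}"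
    then have "vadd a z \<in> dot_ker N \<chi>" using assms dot_vadd vadd_in_F2n by (auto simp: dot_ker_def)
    moreover have "z = vadd a (vadd a z)" by simp
    ultimately show "z \<in> vadd a ` dot_ker N \<chi>" by blast
  qed
qed

lemma card_dot_ker_and_complement:
  assumes "\<chi> \<in> F2n (Suc D)" "\<chi> \<noteq> vzero"
  shows "card (dot_ker (Suc D) \<chi>) = 2 ^ D" "card {a\<in>F2n (Suc D). dot \<chi> a} = 2 ^ D"
proof -
  let ?N = "Suc D" and ?K = "dot_ker (Suc D) \<chi>"
  obtain m where "\<chi> m" using assms(2) by (auto simp: vzero_def fun_eq_iff)
  moreover from this have "m < ?N" using assms(1) by (auto simp: F2n_def not_le[symmetric])
  ultimately have e: "unit_vec m \<in> F2n ?N" "dot \<chi> (unit_vec m)"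
    using unit_vec_in_F2n dot_unit_vec by auto
  have complement: "{a\<in>F2n ?N. dot \<chi> a} = F2n ?N - ?K" by (auto simp: dot_ker_def)
  have "vadd (unit_vec m) ` ?K = F2n ?N - ?K"
    using vadd_image_dot_ker[OF e(1)] e(2) by (auto simp: dot_ker_def)
  moreover have "card (vadd (unit_vec m) ` ?K) = card ?K" by (rule card_image) (simp add: inj_on_def)
  moreover have "card (F2n ?N - ?K) = card (F2n ?N) - card ?K"
    by (rule card_Diff_subset) (simp_all add: dot_ker_subset_F2n)
  moreover have "card ?K \<le> card (F2n ?N)" by (rule card_mono) (simp_all add: dot_ker_subset_F2n)
  ultimately show "card ?K = 2 ^ D" "card {a\<in>F2n ?N. dot \<chi> a} = 2 ^ D"
    using card_F2n[of ?N] complement by simp_all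
qed

lemma dot_ker_eq_imp_eq:
  assumes "\<chi> \<in> F2n N" "\<chi>' \<in> F2n N" "dot_ker N \<chi> = dot_ker N \<chi>'"
  shows "\<chi> = \<chi>'"
proof
  fix m show "\<chi> m = \<chi>' m"
  proof (cases "m < N")
    case True
    then have "(unit_vec m \<in> dot_ker N \<chi>) = (\<not> \<chi> m)" "(unit_vec m \<in> dot_ker N \<chi>') = (\<not> \<chi>' m)"
      using unit_vec_in_F2n by (simp_all add: dot_ker_def dot_unit_vec)
    then show ?thesis using assms(3) by simp
  next
    case False
    then show ?thesis using assms(1,2) by (simp add: F2n_def)
  qed
qed

definition indep_seqs_over_ker :: "nat \<Rightarrow> (nat \<Rightarrow> bool) \<Rightarrow> (nat \<Rightarrow> nat \<Rightarrow> bool) set" where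
  "indep_seqs_over_ker D \<chi> = {M\<in>indep_seqs (F2n (Suc D)) (Suc D). span_seq M D = dot_ker (Suc D) \<chi>}"

lemma card_indep_seqs_over_ker:
  assumes "\<chi> \<in> F2n (Suc D)" "\<chi> \<noteq> vzero"
  shows "card (indep_seqs_over_ker D \<chi>) = frames_per_flat D"
proof -
  let ?N = "Suc D" and ?K = "dot_ker (Suc D) \<chi>"
  have K: "subspace2 ?K" "finite ?K" "card ?K = 2 ^ D"
    using subspace2_dot_ker card_dot_ker_and_complement(1)[OF assms] by simp_all
  have "indep_seqs_over_ker D \<chi> = {M\<in>indep_seqs (F2n ?N) (Suc D). truncate_seq M D \<in> indep_seqs ?K D}"
  proof (intro set_eqI iffI)
    fix M assume "M \<in> indep_seqs_over_ker D \<chi>"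
    then have M: "M \<in> indep_seqs (F2n ?N) (Suc D)" "span_seq M D = ?K"
      by (auto simp: indep_seqs_over_ker_def)
    have "\<forall>i<D. truncate_seq M D i \<in> ?K"
      using M(2) seq_in_span_seq[of _ D M] by (simp add: truncate_seq_def)
    then have "truncate_seq M D \<in> indep_seqs ?K D"
      using truncate_seq_in_indep_seqs(1)[OF M(1)] by (simp add: indep_seqs_def)
    then show "M \<in> {M\<in>indep_seqs (F2n ?N) (Suc D). truncate_seq M D \<in> indep_seqs ?K D}" using M by simp
  next
    fix M assume "M \<in> {M\<in>indep_seqs (F2n ?N) (Suc D). truncate_seq M D \<in> indep_seqs ?K D}"
    then have M: "M \<in> indep_seqs (F2n ?N) (Suc D)" "truncate_seq M D \<in> indep_seqs ?K D" by auto
    have "span_seq M D = ?K"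
      using span_seq_eq_of_indep_seqs[OF K M(2)] span_seq_truncate_seq[of D D M] by simp
    then show "M \<in> indep_seqs_over_ker D \<chi>" using M(1) by (simp add: indep_seqs_over_ker_def)
  qed
  moreover have "{w\<in>indep_seqs (F2n ?N) D. w \<in> indep_seqs ?K D} = indep_seqs ?K D"
    using dot_ker_subset_F2n by (auto simp: indep_seqs_def)
  ultimately have "card (indep_seqs_over_ker D \<chi>) = (card (F2n ?N) - 2 ^ D) * card (indep_seqs ?K D)"
    using card_indep_seqs_Suc_filter[OF subspace2_F2n finite_F2n, of ?N D "\<lambda>w. w \<in> indep_seqs ?K D"]
    by simp
  also have "\<dots> = 2 ^ D * (\<Prod>i<D. 2 ^ D - 2 ^ i)"
    using card_indep_seqs[OF K(1,2), of D] K(3) card_F2n[of ?N] by simp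
  finally show ?thesis by (simp add: frames_per_flat_def)
qed

lemma prod_pow2_diff_Suc: "(\<Prod>i<Suc D. (2::nat) ^ Suc D - 2 ^ i) = (2 ^ Suc D - 1) * frames_per_flat D"
proof -
  have "(\<Prod>i<Suc D. (2::nat) ^ Suc D - 2 ^ i) = (2 ^ Suc D - 2 ^ 0) * (\<Prod>i<D. 2 ^ Suc D - 2 ^ Suc i)"
    by (rule prod.lessThan_Suc_shift)
  also have "(\<Prod>i<D. (2::nat) ^ Suc D - 2 ^ Suc i) = (\<Prod>i<D. 2 * (2 ^ D - 2 ^ i))"
    by (rule prod.cong) (simp_all add: diff_mult_distrib2)
  also have "\<dots> = 2 ^ D * (\<Prod>i<D. 2 ^ D - 2 ^ i)"
    by (simp add: prod.distrib)
  finally show ?thesis by (simp add: frames_per_flat_def)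
qed

lemma card_F2n_minus_vzero: "card (F2n N - {vzero}) = 2 ^ N - 1"
  using card_F2n[of N] by (simp add: card_Diff_singleton)

lemma card_frames_full: "card (frames (Suc D) (Suc D)) = 2 ^ Suc D * ((2 ^ Suc D - 1) * frames_per_flat D)"
  unfolding frames_def using card_indep_seqs_F2n[of "Suc D" "Suc D"] prod_pow2_diff_Suc[of D]
  by (simp add: card_cartesian_product card_F2n)

lemma disjoint_indep_seqs_over_ker:
  "\<chi> \<in> F2n (Suc D) \<Longrightarrow> \<chi>' \<in> F2n (Suc D) \<Longrightarrow> \<chi> \<noteq> \<chi>' \<Longrightarrow>
    indep_seqs_over_ker D \<chi> \<inter> indep_seqs_over_ker D \<chi>' = {}"
  using dot_ker_eq_imp_eq by (fastforce simp: indep_seqs_over_ker_def)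

text \<open>Every ordered basis lies over exactly one hyperplane; instead of proving this by duality
  we count: the disjoint sets \<open>indep_seqs_over_ker D \<chi>\<close> already exhaust all ordered bases.\<close>

lemma indep_seqs_eq_UN_over_ker:
  "indep_seqs (F2n (Suc D)) (Suc D) = (\<Union>\<chi>\<in>F2n (Suc D) - {vzero}. indep_seqs_over_ker D \<chi>)"
proof -
  let ?N = "Suc D" and ?X = "F2n (Suc D) - {vzero}"
  have sub: "(\<Union>\<chi>\<in>?X. indep_seqs_over_ker D \<chi>) \<subseteq> indep_seqs (F2n ?N) ?N"
    by (auto simp: indep_seqs_over_ker_def)
  have fin: "finite (indep_seqs (F2n ?N) ?N)" by (simp add: finite_indep_seqs)
  have "finite (indep_seqs_over_ker D \<chi>)" for \<chi>
    using fin by (rule rev_finite_subset) (auto simp: indep_seqs_over_ker_def)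
  then have "card (\<Union>\<chi>\<in>?X. indep_seqs_over_ker D \<chi>) = (\<Sum>\<chi>\<in>?X. card (indep_seqs_over_ker D \<chi>))"
    using disjoint_indep_seqs_over_ker by (intro card_UN_disjoint) auto
  also have "\<dots> = (\<Sum>\<chi>\<in>?X. frames_per_flat D)" by (rule sum.cong) (auto simp: card_indep_seqs_over_ker)
  also have "\<dots> = card (indep_seqs (F2n ?N) ?N)"
    using card_F2n_minus_vzero[of ?N] card_indep_seqs_F2n[of ?N ?N] prod_pow2_diff_Suc[of D] by simp
  finally show ?thesis using card_subset_eq[OF fin sub] by simp
qed

definition count_translates :: "nat \<Rightarrow> (nat \<Rightarrow> bool) set \<Rightarrow> nat \<Rightarrow> (nat \<Rightarrow> bool) set \<Rightarrow> nat" where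
  "count_translates N B S K = card {a\<in>F2n N. card (vadd a ` K \<inter> B) = S}"

lemma count_translates_dot_ker:
  assumes "\<chi> \<in> F2n (Suc D)" "\<chi> \<noteq> vzero" "B \<subseteq> F2n (Suc D)"
  shows "count_translates (Suc D) B S (dot_ker (Suc D) \<chi>) =
     (if card (B - dot_ker (Suc D) \<chi>) = S then 2 ^ D else 0) + (if card (B \<inter> dot_ker (Suc D) \<chi>) = S then 2 ^ D else 0)"
proof -
  let ?N = "Suc D" and ?K = "dot_ker (Suc D) \<chi>"
  let ?odd = "{a\<in>F2n ?N. dot \<chi> a \<and> card (B - ?K) = S}" and ?even = "{a\<in>F2n ?N. \<not> dot \<chi> a \<and> card (B \<inter> ?K) = S}"
  have "vadd a ` ?K \<inter> B = (if dot \<chi> a then B - ?K else B \<inter> ?K)" if "a \<in> F2n ?N" for a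
    using vadd_image_dot_ker[OF that] assms(3) by (auto simp: dot_ker_def)
  then have "{a\<in>F2n ?N. card (vadd a ` ?K \<inter> B) = S} = ?odd \<union> ?even"
    by (auto split: if_splits)
  moreover have "card (?odd \<union> ?even) = card ?odd + card ?even" by (rule card_Un_disjoint) auto
  moreover have "card ?odd = (if card (B - ?K) = S then 2 ^ D else 0)"
    using card_dot_ker_and_complement(2)[OF assms(1,2)] by auto
  moreover have "card ?even = (if card (B \<inter> ?K) = S then 2 ^ D else 0)"
    using card_dot_ker_and_complement(1)[OF assms(1,2)] by (auto simp: dot_ker_def)
  ultimately show ?thesis by (simp add: count_translates_def)
qed

lemma card_frames_hyperplane_Int:
  assumes "B \<subseteq> F2n (Suc D)"
  shows "card {\<mu>\<in>frames (Suc D) (Suc D). card (frame_flat D \<mu> \<inter> B) = S} =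
    (\<Sum>\<chi>\<in>F2n (Suc D) - {vzero}. frames_per_flat D * count_translates (Suc D) B S (dot_ker (Suc D) \<chi>))"
proof -
  let ?N = "Suc D" and ?X = "F2n (Suc D) - {vzero}"
  have "card {\<mu>\<in>frames ?N ?N. card (frame_flat D \<mu> \<inter> B) = S} =
     (\<Sum>M\<in>indep_seqs (F2n ?N) ?N. count_translates ?N B S (span_seq M D))"
    unfolding frames_def count_translates_def frame_flat_def
    by (subst card_filter_Times_sum_right) (simp_all add: finite_indep_seqs)
  also have "\<dots> = (\<Sum>\<chi>\<in>?X. \<Sum>M\<in>indep_seqs_over_ker D \<chi>. count_translates ?N B S (span_seq M D))"
    unfolding indep_seqs_eq_UN_over_ker
  proof (rule sum.UNION_disjoint)
    show "\<forall>\<chi>\<in>?X. finite (indep_seqs_over_ker D \<chi>)"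
      using finite_indep_seqs[of "F2n ?N" ?N] by (auto simp: indep_seqs_over_ker_def)
    show "\<forall>\<chi>\<in>?X. \<forall>\<chi>'\<in>?X. \<chi> \<noteq> \<chi>' \<longrightarrow> indep_seqs_over_ker D \<chi> \<inter> indep_seqs_over_ker D \<chi>' = {}"
      using disjoint_indep_seqs_over_ker by blast
  qed simp
  also have "\<dots> = (\<Sum>\<chi>\<in>?X. frames_per_flat D * count_translates ?N B S (dot_ker ?N \<chi>))"
  proof (rule sum.cong[OF refl])
    fix \<chi> assume \<chi>: "\<chi> \<in> ?X"
    have "(\<Sum>M\<in>indep_seqs_over_ker D \<chi>. count_translates ?N B S (span_seq M D)) =
        (\<Sum>M\<in>indep_seqs_over_ker D \<chi>. count_translates ?N B S (dot_ker ?N \<chi>))"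
      by (rule sum.cong) (auto simp: indep_seqs_over_ker_def)
    then show "(\<Sum>M\<in>indep_seqs_over_ker D \<chi>. count_translates ?N B S (span_seq M D)) =
        frames_per_flat D * count_translates ?N B S (dot_ker ?N \<chi>)"
      using card_indep_seqs_over_ker[of \<chi> D] \<chi> by simp
  qed
  finally show ?thesis .
qed

lemma card_frames_hyperplane_Int_le_half:
  assumes "B \<subseteq> F2n (Suc D)" "card B \<noteq> 2 * S"
  shows "2 * card {\<mu>\<in>frames (Suc D) (Suc D). card (frame_flat D \<mu> \<inter> B) = S} \<le> card (frames (Suc D) (Suc D))"
proof -
  let ?N = "Suc D"
  have le: "count_translates ?N B S (dot_ker ?N \<chi>) \<le> 2 ^ D" if \<chi>: "\<chi> \<in> F2n ?N - {vzero}" for \<chi>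
  proof -
    have "card B = card (B \<inter> dot_ker ?N \<chi>) + card (B - dot_ker ?N \<chi>)"
      using card_Int_Diff finite_subset[OF assms(1) finite_F2n] by blast
    then have "\<not> (card (B - dot_ker ?N \<chi>) = S \<and> card (B \<inter> dot_ker ?N \<chi>) = S)" using assms(2) by auto
    then show ?thesis using count_translates_dot_ker[of \<chi> D B S] \<chi> assms(1) by auto
  qed
  have "card {\<mu>\<in>frames ?N ?N. card (frame_flat D \<mu> \<inter> B) = S} \<le> (\<Sum>\<chi>\<in>F2n ?N - {vzero}. frames_per_flat D * 2 ^ D)"
    unfolding card_frames_hyperplane_Int[OF assms(1)] by (rule sum_mono) (simp add: le)
  also have "\<dots> = (2 ^ ?N - 1) * frames_per_flat D * 2 ^ D" using card_F2n_minus_vzero[of ?N] by simp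
  finally show ?thesis unfolding card_frames_full by (simp add: ac_simps)
qed

lemma card_frames_hyperplane_Int_balanced:
  assumes "B \<subseteq> F2n (Suc D)" "card B = 2 * S"
  shows "card {\<mu>\<in>frames (Suc D) (Suc D). card (frame_flat D \<mu> \<inter> B) = S} =
     2 ^ Suc D * frames_per_flat D * card {\<chi>\<in>F2n (Suc D) - {vzero}. card (B \<inter> dot_ker (Suc D) \<chi>) = S}"
proof -
  let ?N = "Suc D"
  have eq: "frames_per_flat D * count_translates ?N B S (dot_ker ?N \<chi>) =
      (if card (B \<inter> dot_ker ?N \<chi>) = S then 2 ^ ?N * frames_per_flat D else 0)"
    if \<chi>: "\<chi> \<in> F2n ?N - {vzero}" for \<chi>
  proof -
    have "card B = card (B \<inter> dot_ker ?N \<chi>) + card (B - dot_ker ?N \<chi>)"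
      using card_Int_Diff finite_subset[OF assms(1) finite_F2n] by blast
    then have "(card (B - dot_ker ?N \<chi>) = S) = (card (B \<inter> dot_ker ?N \<chi>) = S)" using assms(2) by auto
    then show ?thesis using count_translates_dot_ker[of \<chi> D B S] \<chi> assms(1) by auto
  qed
  have "card {\<mu>\<in>frames ?N ?N. card (frame_flat D \<mu> \<inter> B) = S} =
      (\<Sum>\<chi>\<in>F2n ?N - {vzero}. if card (B \<inter> dot_ker ?N \<chi>) = S then 2 ^ ?N * frames_per_flat D else 0)"
    unfolding card_frames_hyperplane_Int[OF assms(1)] by (rule sum.cong) (simp_all add: eq)
  also have "\<dots> = (\<Sum>\<chi>\<in>{\<chi>\<in>F2n ?N - {vzero}. card (B \<inter> dot_ker ?N \<chi>) = S}. 2 ^ ?N * frames_per_flat D)"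
    by (rule sum.inter_filter[symmetric]) simp
  finally show ?thesis by simp
qed

lemma walsh_indicator:
  assumes "B \<subseteq> F2n N"
  shows "walsh N (\<lambda>x. if x \<in> B then 1 else 0) \<chi> = (\<Sum>x\<in>B. (-1) ^ card {i. \<chi> i \<and> x i})"
proof -
  have "walsh N (\<lambda>x. if x \<in> B then 1 else 0) \<chi> = (\<Sum>x\<in>F2n N. if x \<in> B then (-1) ^ card {i. \<chi> i \<and> x i} else 0)"
    unfolding walsh_def by (rule sum.cong) auto
  also have "\<dots> = (\<Sum>x\<in>F2n N \<inter> B. (-1) ^ card {i. \<chi> i \<and> x i})"
    by (rule sum.inter_restrict[symmetric]) simp
  also have "F2n N \<inter> B = B" using assms by blast
  finally show ?thesis .
qed

lemma walsh_indicator_balanced: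
  assumes "B \<subseteq> F2n N" "card B = 2 * S" "card (B \<inter> dot_ker N \<chi>) = S"
  shows "walsh N (\<lambda>x. if x \<in> B then 1 else 0) \<chi> = 0"
proof -
  let ?sgn = "\<lambda>x. (-1::int) ^ card {i. \<chi> i \<and> x i}"
  have finB: "finite B" using finite_subset[OF assms(1) finite_F2n] .
  have "(\<Sum>x\<in>B. ?sgn x) = (\<Sum>x\<in>B \<inter> dot_ker N \<chi>. ?sgn x) + (\<Sum>x\<in>B - dot_ker N \<chi>. ?sgn x)"
    using finB by (rule sum.Int_Diff)
  also have "(\<Sum>x\<in>B \<inter> dot_ker N \<chi>. ?sgn x) = (\<Sum>x\<in>B \<inter> dot_ker N \<chi>. 1)"
    by (rule sum.cong) (auto simp: dot_ker_def dot_def)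
  also have "(\<Sum>x\<in>B - dot_ker N \<chi>. ?sgn x) = (\<Sum>x\<in>B - dot_ker N \<chi>. -1)"
    by (rule sum.cong) (use assms(1) in \<open>auto simp: dot_ker_def dot_def\<close>)
  moreover have "card (B - dot_ker N \<chi>) = S"
    using card_Int_Diff[OF finB, of "dot_ker N \<chi>"] assms(2,3) by simp
  ultimately show ?thesis using assms(3) walsh_indicator[OF assms(1)] by simp
qed

text \<open>The hyperplanes \<open>\<chi>\<^sup>\<bottom>\<close> splitting \<open>B\<close> evenly are zeros of the Walsh transform of the
  indicator of \<open>B\<close>, whose coefficient at \<open>0\<close> is \<open>|B| = j 2\<^sup>K\<^sup>+\<^sup>1\<close>.\<close>

lemma card_balanced_hyperplanes_le:
  assumes "B \<subseteq> F2n N" "card B = 2 * S" "S = j * 2 ^ K" "odd j"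
  shows "card {\<chi>\<in>F2n N. card (B \<inter> dot_ker N \<chi>) = S} \<le> 2 ^ N - 2 ^ (N - (K + 1))"
proof -
  define f where "f = (\<lambda>x. if x \<in> B then (1::int) else 0)"
  have walsh_0: "walsh N f vzero = int j * 2 ^ (K + 1)"
    using walsh_indicator[OF assms(1), of vzero] assms(2,3) by (simp add: f_def vzero_def)
  have "\<not> (2::int) ^ (K + 1 + 1) dvd walsh N f vzero"
  proof
    assume "(2::int) ^ (K + 1 + 1) dvd walsh N f vzero"
    then have "(2::int) ^ (K + 1) * 2 dvd 2 ^ (K + 1) * int j" using walsh_0 by (simp add: mult.commute)
    then have "(2::int) dvd int j" by (subst (asm) dvd_mult_cancel_left) auto
    then show False using assms(4) by simp
  qed
  then have "2 ^ (N - (K + 1)) \<le> card (walsh_supp N f)" by (rule card_walsh_supp_ge[OF vzero_in_F2n])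
  moreover have "card {\<chi>\<in>F2n N. card (B \<inter> dot_ker N \<chi>) = S} \<le> card (F2n N - walsh_supp N f)"
    using walsh_indicator_balanced[OF assms(1,2)] by (intro card_mono) (auto simp: walsh_supp_def f_def)
  moreover have "card (F2n N - walsh_supp N f) = 2 ^ N - card (walsh_supp N f)"
    using card_Diff_subset[of "walsh_supp N f" "F2n N"] card_F2n by (simp add: walsh_supp_def)
  ultimately show ?thesis by linarith
qed

section \<open>From \<open>D\<close>-flats to \<open>(D+1)\<close>-flats\<close>

definition hyperplane_ratio :: "nat \<Rightarrow> nat \<Rightarrow> real" where
  "hyperplane_ratio D K = (2 ^ Suc D - 2 ^ (Suc D - (K + 1))) / (2 ^ Suc D - 1)"

lemma hyperplane_ratio_minus_half:
  "hyperplane_ratio D K - 1/2 = 1/2 - (2 ^ (D - K) - 1) / (2 ^ Suc D - 1)"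
proof -
  have "(2::real) ^ Suc D - 1 > 0" using one_less_power[of "2::real" "Suc D"] by simp
  then show ?thesis unfolding hyperplane_ratio_def by (simp add: field_simps)
qed

lemma hyperplane_ratio_ge_half: "1/2 \<le> hyperplane_ratio D K"
proof -
  define a where "a = (2::real) ^ (D - K)"
  define b where "b = (2::real) ^ D"
  have "a \<le> b" unfolding a_def b_def by (rule power_increasing) auto
  moreover have "1 \<le> b" unfolding b_def by simp
  ultimately have "(a - 1) / (2 * b - 1) \<le> 1/2" by (simp add: divide_le_eq)
  then show ?thesis using hyperplane_ratio_minus_half[of D K] by (simp add: a_def b_def)
qed

text \<open>The local estimate inside one \<open>(D+1)\<close>-flat, identified with \<open>\<bbbF>\<^sub>2\<^sup>D\<^sup>+\<^sup>1\<close> and with \<open>B\<close> the trace of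
  the set: at most half of its hyperplanes meet \<open>B\<close> in \<open>S\<close> points unless \<open>|B| = 2S\<close>, and then
  at most a \<open>hyperplane_ratio D K\<close> fraction does.\<close>

lemma hyperplane_frames_bound:
  assumes "B \<subseteq> F2n (Suc D)" "S = j * 2 ^ K" "odd j"
  shows "real (card {\<mu>\<in>frames (Suc D) (Suc D). card (frame_flat D \<mu> \<inter> B) = S})
    \<le> (if card B = 2 * S then hyperplane_ratio D K else 1/2) * real (card (frames (Suc D) (Suc D)))"
proof (cases "card B = 2 * S")
  case False
  then show ?thesis using card_frames_hyperplane_Int_le_half[OF assms(1) False] by simp
next
  case True
  let ?N = "Suc D"
  let ?Z = "card {\<chi>\<in>F2n ?N - {vzero}. card (B \<inter> dot_ker ?N \<chi>) = S}"
  define P where "P = (2::real) ^ ?N"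
  define Q where "Q = (2::real) ^ (?N - (K + 1))"
  define C where "C = real (frames_per_flat D)"
  have "?Z \<le> card {\<chi>\<in>F2n ?N. card (B \<inter> dot_ker ?N \<chi>) = S}" by (rule card_mono) auto
  also have "\<dots> \<le> 2 ^ ?N - 2 ^ (?N - (K + 1))"
    by (rule card_balanced_hyperplanes_le[OF assms(1) True assms(2,3)])
  finally have "real ?Z \<le> real ((2::nat) ^ ?N - 2 ^ (?N - (K + 1)))" by (rule of_nat_mono)
  moreover have "(2::nat) ^ (?N - (K + 1)) \<le> 2 ^ ?N" by (rule power_increasing) auto
  then have "real ((2::nat) ^ ?N - 2 ^ (?N - (K + 1))) = P - Q" by (simp add: P_def Q_def of_nat_diff)
  ultimately have "real ?Z \<le> P - Q" by simp
  then have "P * C * real ?Z \<le> P * C * (P - Q)" by (intro mult_left_mono) (auto simp: P_def C_def)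
  also have "\<dots> = (P - Q) / (P - 1) * (P * ((P - 1) * C))"
    using one_less_power[of "2::real" ?N] by (simp add: P_def field_simps)
  finally show ?thesis
    using card_frames_hyperplane_Int_balanced[OF assms(1) True] card_frames_full[of D] True
    by (simp add: hyperplane_ratio_def P_def Q_def C_def of_nat_diff)
qed

lemma card_frames_fibre_filter:
  assumes \<sigma>: "\<sigma> \<in> frames n N" and "r \<le> N"
  shows "card {\<tau>\<in>frames n N. frame_flat N \<tau> = frame_flat N \<sigma> \<and> P (card (frame_flat r \<tau> \<inter> A))} =
    card {\<mu>\<in>frames N N. P (card (frame_flat r \<mu> \<inter> {b\<in>F2n N. frame_map \<sigma> b \<in> A}))}"
proof -
  let ?good = "\<lambda>\<mu>. P (card (frame_flat r (frame_comp \<sigma> \<mu>) \<inter> A))"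
  have "{\<tau>\<in>frames n N. frame_flat N \<tau> = frame_flat N \<sigma> \<and> P (card (frame_flat r \<tau> \<inter> A))} =
      {\<tau>\<in>{\<tau>\<in>frames n N. frame_flat N \<tau> = frame_flat N \<sigma>}. P (card (frame_flat r \<tau> \<inter> A))}"
    by auto
  also have "\<dots> = {\<tau>\<in>frame_comp \<sigma> ` frames N N. P (card (frame_flat r \<tau> \<inter> A))}"
    unfolding frame_fibre_eq_image_frame_comp[OF \<sigma>] ..
  also have "\<dots> = frame_comp \<sigma> ` {\<mu>\<in>frames N N. ?good \<mu>}" by auto
  finally have "{\<tau>\<in>frames n N. frame_flat N \<tau> = frame_flat N \<sigma> \<and> P (card (frame_flat r \<tau> \<inter> A))} =
      frame_comp \<sigma> ` {\<mu>\<in>frames N N. ?good \<mu>}" .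
  moreover have "inj_on (frame_comp \<sigma>) {\<mu>\<in>frames N N. ?good \<mu>}"
    using inj_on_frame_comp[OF \<sigma>] by (rule inj_on_subset) auto
  moreover have "{\<mu>\<in>frames N N. ?good \<mu>} =
      {\<mu>\<in>frames N N. P (card (frame_flat r \<mu> \<inter> {b\<in>F2n N. frame_map \<sigma> b \<in> A}))}"
    using card_frame_flat_frame_comp_Int[OF \<sigma> _ assms(2)] by auto
  ultimately show ?thesis by (simp add: card_image)
qed

lemma flat_fibre_bound:
  assumes \<sigma>: "\<sigma> \<in> frames n (Suc D)" and "S = j * 2 ^ K" "odd j"
  shows "real (card {\<tau>\<in>frames n (Suc D). frame_flat (Suc D) \<tau> = frame_flat (Suc D) \<sigma> \<and> card (frame_flat D \<tau> \<inter> A) = S})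
    \<le> (if card (frame_flat (Suc D) \<sigma> \<inter> A) = 2 * S then hyperplane_ratio D K else 1/2)
      * real (card {\<tau>\<in>frames n (Suc D). frame_flat (Suc D) \<tau> = frame_flat (Suc D) \<sigma>})"
proof -
  define B where "B = {b\<in>F2n (Suc D). frame_map \<sigma> b \<in> A}"
  have "card (frame_flat (Suc D) \<sigma> \<inter> A) = card B"
    using card_image_Int[OF inj_on_frame_map[OF \<sigma>] order_refl, of A] frame_map_image_F2n[OF \<sigma>]
    by (simp add: B_def Int_absorb1)
  moreover have "card {\<tau>\<in>frames n (Suc D). frame_flat (Suc D) \<tau> = frame_flat (Suc D) \<sigma>} =
      card (frames (Suc D) (Suc D))"
    using card_frames_fibre_filter[OF \<sigma> order_refl, of "\<lambda>_. True"] by simp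
  moreover have "B \<subseteq> F2n (Suc D)" by (auto simp: B_def)
  ultimately show ?thesis
    using hyperplane_frames_bound[of B D S j K] assms(2,3)
      card_frames_fibre_filter[OF \<sigma> le_SucI[OF order_refl], of "\<lambda>c. c = S" A]
    by (simp add: B_def)
qed

lemma card_filter_le_fibrewise:
  fixes \<rho> :: real
  assumes "finite T"
    and "\<And>Q. Q \<in> f ` T \<Longrightarrow>
      real (card {\<tau>\<in>T. f \<tau> = Q \<and> P \<tau>}) \<le> (if R Q then \<rho> else 1/2) * real (card {\<tau>\<in>T. f \<tau> = Q})"
  shows "real (card {\<tau>\<in>T. P \<tau>}) \<le> real (card T) / 2 + (\<rho> - 1/2) * real (card {\<tau>\<in>T. R (f \<tau>)})"
proof -
  let ?fibre = "\<lambda>Q. real (card {\<tau>\<in>T. f \<tau> = Q})"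
  have sum_fibres: "real (card {\<tau>\<in>T. P' \<tau>}) = (\<Sum>Q\<in>f ` T. real (card {\<tau>\<in>T. f \<tau> = Q \<and> P' \<tau>}))" for P'
    using card_filter_eq_sum_fibres[OF assms(1), of P' f] by (simp add: of_nat_sum)
  have "real (card {\<tau>\<in>T. P \<tau>}) \<le> (\<Sum>Q\<in>f ` T. (if R Q then \<rho> else 1/2) * ?fibre Q)"
    unfolding sum_fibres[of P] by (rule sum_mono) (rule assms(2))
  also have "\<dots> = (\<Sum>Q\<in>f ` T. ?fibre Q / 2 + (\<rho> - 1/2) * (if R Q then ?fibre Q else 0))"
    by (rule sum.cong) (simp_all add: algebra_simps)
  also have "\<dots> = (\<Sum>Q\<in>f ` T. ?fibre Q) / 2 + (\<rho> - 1/2) * (\<Sum>Q\<in>f ` T. if R Q then ?fibre Q else 0)"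
    by (simp add: sum.distrib sum_distrib_left sum_divide_distrib)
  also have "(\<Sum>Q\<in>f ` T. ?fibre Q) = real (card T)" using sum_fibres[of "\<lambda>_. True"] by simp
  also have "(\<Sum>Q\<in>f ` T. if R Q then ?fibre Q else 0) = real (card {\<tau>\<in>T. R (f \<tau>)})"
    unfolding sum_fibres[of "\<lambda>\<tau>. R (f \<tau>)"]
  proof (rule sum.cong[OF refl])
    fix Q
    have "{\<tau>\<in>T. f \<tau> = Q \<and> R (f \<tau>)} = (if R Q then {\<tau>\<in>T. f \<tau> = Q} else {})" by auto
    then show "(if R Q then ?fibre Q else 0) = real (card {\<tau>\<in>T. f \<tau> = Q \<and> R (f \<tau>)})" by simp
  qed
  finally show ?thesis .
qed

lemma card_frames_prefix_filter:
  "card {\<tau>\<in>frames n (Suc r). P (fst \<tau>, truncate_seq (snd \<tau>) r)} = (2 ^ n - 2 ^ r) * card {\<tau>\<in>frames n r. P \<tau>}"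
proof -
  have "card {\<tau>\<in>frames n (Suc r). P (fst \<tau>, truncate_seq (snd \<tau>) r)} =
      (\<Sum>x\<in>F2n n. card {v\<in>indep_seqs (F2n n) (Suc r). P (x, truncate_seq v r)})"
    unfolding frames_def by (subst card_filter_Times_sum_left) (simp_all add: finite_indep_seqs)
  also have "\<dots> = (\<Sum>x\<in>F2n n. (2 ^ n - 2 ^ r) * card {w\<in>indep_seqs (F2n n) r. P (x, w)})"
  proof (rule sum.cong[OF refl])
    fix x
    show "card {v\<in>indep_seqs (F2n n) (Suc r). P (x, truncate_seq v r)} =
        (2 ^ n - 2 ^ r) * card {w\<in>indep_seqs (F2n n) r. P (x, w)}"
      using card_indep_seqs_Suc_filter[OF subspace2_F2n finite_F2n, of n r "\<lambda>w. P (x, w)"] card_F2n[of n]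
      by simp
  qed
  also have "\<dots> = (2 ^ n - 2 ^ r) * card {\<tau>\<in>frames n r. P \<tau>}"
    unfolding frames_def sum_distrib_left[symmetric]
    by (subst card_filter_Times_sum_left) (simp_all add: finite_indep_seqs)
  finally show ?thesis .
qed

lemma frame_flat_truncate_seq: "D \<le> r \<Longrightarrow> frame_flat D (fst \<tau>, truncate_seq (snd \<tau>) r) = frame_flat D \<tau>"
  by (simp add: frame_flat_def span_seq_truncate_seq)

lemma card_frames_filter_flat_add:
  "card {\<tau>\<in>frames n (D + k). P (frame_flat D \<tau>)} =
    (\<Prod>i<k. 2 ^ n - 2 ^ (D + i)) * card {\<tau>\<in>frames n D. P (frame_flat D \<tau>)}"
proof (induction k)
  case 0 then show ?case by simp
next
  case (Suc k)
  have "card {\<tau>\<in>frames n (Suc (D + k)). P (frame_flat D \<tau>)} =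
      card {\<tau>\<in>frames n (Suc (D + k)). P (frame_flat D (fst \<tau>, truncate_seq (snd \<tau>) (D + k)))}"
    by (simp add: frame_flat_truncate_seq)
  also have "\<dots> = (2 ^ n - 2 ^ (D + k)) * card {\<tau>\<in>frames n (D + k). P (frame_flat D \<tau>)}"
    by (rule card_frames_prefix_filter)
  finally show ?case using Suc by (simp add: mult.assoc mult.left_commute)
qed

lemma lam_eq_frames_prefix:
  assumes "D \<le> r" "r \<le> n"
  shows "lam n D S A = real (card {\<tau>\<in>frames n r. card (frame_flat D \<tau> \<inter> A) = S}) / real (card (frames n r))"
proof -
  obtain k where r: "r = D + k" using assms(1) le_Suc_ex by blast
  define F where "F = (\<Prod>i<k. (2::nat) ^ n - 2 ^ (D + i))"
  have "F > 0" unfolding F_def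
  proof (rule prod_pos)
    fix i assume "i \<in> {..<k}"
    then have "D + i < n" using assms(2) r by simp
    then have "(2::nat) ^ (D + i) < 2 ^ n" by (rule power_strict_increasing) simp
    then show "0 < (2::nat) ^ n - 2 ^ (D + i)" by simp
  qed
  moreover have "card {\<tau>\<in>frames n r. card (frame_flat D \<tau> \<inter> A) = S} =
      F * card {\<tau>\<in>frames n D. card (frame_flat D \<tau> \<inter> A) = S}"
    unfolding r F_def by (rule card_frames_filter_flat_add)
  moreover have "card (frames n r) = F * card (frames n D)"
    using card_frames_filter_flat_add[of n D k "\<lambda>_. True"] by (simp add: r F_def)
  ultimately show ?thesis by (simp add: lam_eq_frames)
qed

lemma lam_le_half_plus:
  assumes "Suc D \<le> n" "S = j * 2 ^ K" "odd j"
  shows "lam n D S A \<le> 1/2 + (hyperplane_ratio D K - 1/2) * lam n (Suc D) (2 * S) A"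
proof -
  let ?T = "frames n (Suc D)" and ?c = "hyperplane_ratio D K - 1/2"
  let ?G = "real (card {\<tau>\<in>?T. card (frame_flat D \<tau> \<inter> A) = S})"
  let ?H = "real (card {\<tau>\<in>?T. card (frame_flat (Suc D) \<tau> \<inter> A) = 2 * S})"
  have T: "real (card ?T) > 0" using card_frames_pos[OF assms(1)] by simp
  have "?G \<le> real (card ?T) / 2 + ?c * ?H"
  proof (rule card_filter_le_fibrewise[OF finite_frames, where f = "frame_flat (Suc D)"
        and P = "\<lambda>\<tau>. card (frame_flat D \<tau> \<inter> A) = S" and R = "\<lambda>Q. card (Q \<inter> A) = 2 * S"])
    fix Q assume "Q \<in> frame_flat (Suc D) ` ?T"
    then obtain \<sigma> where "\<sigma> \<in> ?T" "Q = frame_flat (Suc D) \<sigma>" by blast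
    then show "real (card {\<tau>\<in>?T. frame_flat (Suc D) \<tau> = Q \<and> card (frame_flat D \<tau> \<inter> A) = S})
      \<le> (if card (Q \<inter> A) = 2 * S then hyperplane_ratio D K else 1/2) * real (card {\<tau>\<in>?T. frame_flat (Suc D) \<tau> = Q})"
      using flat_fibre_bound[OF _ assms(2,3)] by blast
  qed
  then have "?G / real (card ?T) \<le> (real (card ?T) / 2 + ?c * ?H) / real (card ?T)"
    using T by (simp add: divide_right_mono)
  also have "\<dots> = 1/2 + ?c * (?H / real (card ?T))" using T by (simp add: add_divide_distrib card_gt_0_iff)
  finally have "?G / real (card ?T) \<le> 1/2 + ?c * (?H / real (card ?T))" .
  then show ?thesis
    using lam_eq_frames_prefix[of D "Suc D" n S A] assms(1) lam_eq_frames[of n "Suc D" "2 * S" A] by simp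
qed

section \<open>Monotonicity in the ambient dimension and the limit\<close>

lemma indep_seqs_extend:
  assumes "subspace2 U" "finite U" "w \<in> indep_seqs U r" "2 ^ (r + k) \<le> card U"
  shows "\<exists>v\<in>indep_seqs U (r + k). \<forall>i<r. v i = w i"
  using assms(4)
proof (induction k)
  case 0 then show ?case using assms(3) by auto
next
  case (Suc k)
  have "(2::nat) ^ (r + k) < 2 ^ (r + Suc k)" by (intro power_strict_increasing) auto
  then have "2 ^ (r + k) \<le> card U" using Suc.prems by linarith
  then obtain v where v: "v \<in> indep_seqs U (r + k)" "\<forall>i<r. v i = w i"
    using Suc.IH by blast
  have "card (span_seq v (r + k)) = 2 ^ (r + k)" using v(1) card_span_seq by (simp add: indep_seqs_def)
  then have "card (span_seq v (r + k)) < card U"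
    using Suc.prems \<open>2 ^ (r + k) < 2 ^ (r + Suc k)\<close> by linarith
  have "\<not> U \<subseteq> span_seq v (r + k)"
  proof
    assume "U \<subseteq> span_seq v (r + k)"
    then have "card U \<le> card (span_seq v (r + k))" by (rule card_mono[OF finite_span_seq])
    with \<open>card (span_seq v (r + k)) < card U\<close> show False by simp
  qed
  then obtain y where y: "y \<in> U - span_seq v (r + k)" by blast
  have "v(r + k := y) \<in> indep_seqs U (Suc (r + k))" by (rule fun_upd_in_indep_seqs[OF v(1) y])
  moreover have "\<forall>i<r. (v(r + k := y)) i = w i" using v(2) by simp
  ultimately show ?case by (intro bexI[of _ "v(r + k := y)"]) simp_all
qed

lemma frame_flat_cong:
  "fst \<tau> = fst \<tau>' \<Longrightarrow> (\<And>i. i < D \<Longrightarrow> snd \<tau> i = snd \<tau>' i) \<Longrightarrow> frame_flat D \<tau> = frame_flat D \<tau>'"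
proof -
  assume "fst \<tau> = fst \<tau>'" "\<And>i. i < D \<Longrightarrow> snd \<tau> i = snd \<tau>' i"
  moreover from this(2) have "span_seq (snd \<tau>) D = span_seq (snd \<tau>') D" by (rule span_seq_cong)
  ultimately show ?thesis by (simp add: frame_flat_def)
qed

text \<open>Precomposing with a fixed \<open>D\<close>-frame of \<open>\<bbbF>\<^sub>2\<^sup>n\<close> permutes the \<open>D\<close>-flats of the frames of
  \<open>\<bbbF>\<^sub>2\<^sup>m\<close>: extend it to an \<open>n\<close>-frame, whose right action on \<open>frames m n\<close> is injective.\<close>

lemma card_filter_frame_comp_right:
  assumes \<mu>: "\<mu> \<in> frames n D" and "D \<le> n"
  shows "card {\<sigma>\<in>frames m n. P (frame_flat D (frame_comp \<sigma> \<mu>))} = card {\<tau>\<in>frames m n. P (frame_flat D \<tau>)}"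
proof -
  obtain a M where aM: "\<mu> = (a, M)" "a \<in> F2n n" "M \<in> indep_seqs (F2n n) D"
    using \<mu> by (auto simp: frames_def)
  have "\<exists>v\<in>indep_seqs (F2n n) (D + (n - D)). \<forall>i<D. v i = M i"
    by (rule indep_seqs_extend[OF subspace2_F2n finite_F2n aM(3)]) (use assms(2) card_F2n in simp)
  then obtain M' where M': "M' \<in> indep_seqs (F2n n) n" "\<forall>i<D. M' i = M i"
    using assms(2) by auto
  let ?\<psi> = "\<lambda>\<sigma>. frame_comp \<sigma> (a, M')"
  have \<mu>': "(a, M') \<in> frames n n" using M' aM by (simp add: frames_def)
  have same_flat: "frame_flat D (frame_comp \<sigma> \<mu>) = frame_flat D (?\<psi> \<sigma>)" for \<sigma>
    by (rule frame_flat_cong) (use aM M' in \<open>simp_all add: frame_comp_def\<close>)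
  have inj: "inj_on ?\<psi> (frames m n)" by (rule inj_on_frame_comp_left[OF \<mu>'])
  have "?\<psi> ` frames m n \<subseteq> frames m n" using frame_comp_in_frames[OF _ \<mu>'] by blast
  then have onto: "?\<psi> ` frames m n = frames m n" by (rule endo_inj_surj[OF finite_frames _ inj])
  have "card {\<sigma>\<in>frames m n. P (frame_flat D (frame_comp \<sigma> \<mu>))} =
      card (?\<psi> ` {\<sigma>\<in>frames m n. P (frame_flat D (?\<psi> \<sigma>))})"
    unfolding same_flat by (rule card_image[OF inj_on_subset[OF inj], symmetric]) auto
  also have "?\<psi> ` {\<sigma>\<in>frames m n. P (frame_flat D (?\<psi> \<sigma>))} = {\<tau>\<in>?\<psi> ` frames m n. P (frame_flat D \<tau>)}"
    by blast
  finally show ?thesis unfolding onto .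
qed

lemma lam_le_lamN: "A \<subseteq> F2n n \<Longrightarrow> lam n D S A \<le> lamN n D S"
  unfolding lamN_def by (rule Max_ge) auto

lemma lamN_attained: "\<exists>A\<in>Pow (F2n n). lamN n D S = lam n D S A"
proof -
  have "lamN n D S \<in> (\<lambda>A. lam n D S A) ` Pow (F2n n)"
    unfolding lamN_def by (rule Max_in) auto
  then show ?thesis by blast
qed

lemma card_frame_comp_filter_le_lamN:
  assumes "\<sigma> \<in> frames m n" "D \<le> n"
  shows "real (card {\<mu>\<in>frames n D. card (frame_flat D (frame_comp \<sigma> \<mu>) \<inter> A) = S})
    \<le> lamN n D S * real (card (frames n D))"
proof -
  define B where "B = {b\<in>F2n n. frame_map \<sigma> b \<in> A}"
  have "{\<mu>\<in>frames n D. card (frame_flat D (frame_comp \<sigma> \<mu>) \<inter> A) = S} =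
      {\<mu>\<in>frames n D. card (frame_flat D \<mu> \<inter> B) = S}"
    using card_frame_flat_frame_comp_Int[OF assms(1) _ order_refl] by (auto simp: B_def)
  then have "real (card {\<mu>\<in>frames n D. card (frame_flat D (frame_comp \<sigma> \<mu>) \<inter> A) = S}) =
      lam n D S B * real (card (frames n D))"
    using lam_eq_frames[of n D S B] card_frames_pos[OF assms(2)] by simp
  also have "\<dots> \<le> lamN n D S * real (card (frames n D))"
    by (rule mult_right_mono[OF lam_le_lamN]) (auto simp: B_def)
  finally show ?thesis .
qed

text \<open>Double count the pairs \<open>(\<sigma>, \<mu>)\<close> of an \<open>n\<close>-frame of \<open>\<bbbF>\<^sub>2\<^sup>n\<^sup>+\<^sup>1\<close> and a \<open>D\<close>-frame of \<open>\<bbbF>\<^sub>2\<^sup>n\<close>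
  for which the flat of \<open>frame_comp \<sigma> \<mu>\<close> meets \<open>A\<close> in \<open>S\<close> points.\<close>

lemma lam_Suc_le_lamN:
  assumes "D \<le> n"
  shows "lam (Suc n) D S A \<le> lamN n D S"
proof -
  let ?T1 = "frames (Suc n) n" and ?T0 = "frames n D"
  let ?good = "\<lambda>\<tau>. card (frame_flat D \<tau> \<inter> A) = S"
  let ?W = "{p\<in>?T1 \<times> ?T0. ?good (frame_comp (fst p) (snd p))}"
  have T0: "real (card ?T0) > 0" and T1: "real (card ?T1) > 0"
    using card_frames_pos assms by simp_all
  have "real (card ?W) = (\<Sum>\<sigma>\<in>?T1. real (card {\<mu>\<in>?T0. ?good (frame_comp \<sigma> \<mu>)}))"
    by (subst card_filter_Times_sum_left) (simp_all add: of_nat_sum)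
  also have "\<dots> \<le> (\<Sum>\<sigma>\<in>?T1. lamN n D S * real (card ?T0))"
    by (rule sum_mono) (rule card_frame_comp_filter_le_lamN[OF _ assms])
  finally have upper: "real (card ?W) \<le> real (card ?T1) * (lamN n D S * real (card ?T0))" by simp
  have "card ?W = (\<Sum>\<mu>\<in>?T0. card {\<sigma>\<in>?T1. ?good (frame_comp \<sigma> \<mu>)})"
    by (subst card_filter_Times_sum_right) simp_all
  also have "\<dots> = (\<Sum>\<mu>\<in>?T0. card {\<tau>\<in>?T1. ?good \<tau>})"
    using card_filter_frame_comp_right[OF _ assms, of _ "Suc n" "\<lambda>Q. card (Q \<inter> A) = S"]
    by (intro sum.cong) simp_all
  finally have "real (card ?T0) * real (card {\<tau>\<in>?T1. ?good \<tau>}) \<le> real (card ?T0) * (lamN n D S * real (card ?T1))"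
    using upper by (simp add: algebra_simps)
  then have "real (card {\<tau>\<in>?T1. ?good \<tau>}) / real (card ?T1) \<le> lamN n D S"
    using T0 T1 by (simp add: divide_le_eq)
  then show ?thesis using lam_eq_frames_prefix[of D n "Suc n" S A] assms by simp
qed

lemma lamN_Suc_le: "D \<le> n \<Longrightarrow> lamN (Suc n) D S \<le> lamN n D S"
proof -
  assume "D \<le> n"
  obtain A where "lamN (Suc n) D S = lam (Suc n) D S A" using lamN_attained by blast
  then show ?thesis using lam_Suc_le_lamN[OF \<open>D \<le> n\<close>] by simp
qed

lemma lamN_nonneg: "0 \<le> lamN n D S"
proof -
  have "0 \<le> lam n D S {}" by (simp add: lam_def)
  also have "\<dots> \<le> lamN n D S" by (rule lam_le_lamN) simp
  finally show ?thesis .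
qed

lemma lamN_convergent: "convergent (\<lambda>n. lamN n D S)"
proof -
  let ?X = "\<lambda>n. lamN (n + D) D S"
  have dec: "decseq ?X" by (rule decseq_SucI) (simp add: lamN_Suc_le)
  have "Bseq ?X"
  proof (rule BseqI'[where K = "lamN D D S"])
    fix n
    have "?X n \<le> ?X 0" using dec[unfolded decseq_def, rule_format, of 0 n] by simp
    then show "norm (?X n) \<le> lamN D D S" using lamN_nonneg[of "n + D" D S] by simp
  qed
  then have "convergent ?X" using dec by (simp add: Bseq_monoseq_convergent monoseq_iff)
  then show ?thesis using convergent_ignore_initial_segment[of "\<lambda>n. lamN n D S" D] by simp
qed

lemma lamstar_le_of_lam_le:
  assumes "0 \<le> c" and lam_le: "\<And>n A. n \<ge> N \<Longrightarrow> A \<subseteq> F2n n \<Longrightarrow> lam n D S A \<le> 1/2 + c * lam n D' S' A"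
  shows "lamstar D S \<le> 1/2 + c * lamstar D' S'"
proof (rule LIMSEQ_le)
  show "(\<lambda>n. lamN n D S) \<longlonglongrightarrow> lamstar D S"
    unfolding lamstar_def using lamN_convergent convergent_LIMSEQ_iff by blast
  have "(\<lambda>n. lamN n D' S') \<longlonglongrightarrow> lamstar D' S'"
    unfolding lamstar_def using lamN_convergent convergent_LIMSEQ_iff by blast
  then show "(\<lambda>n. 1/2 + c * lamN n D' S') \<longlonglongrightarrow> 1/2 + c * lamstar D' S'"
    by (intro tendsto_intros)
  show "\<exists>N0. \<forall>n\<ge>N0. lamN n D S \<le> 1/2 + c * lamN n D' S'"
  proof (intro exI allI impI)
    fix n assume "N \<le> n"
    obtain A where "A \<in> Pow (F2n n)" "lamN n D S = lam n D S A" using lamN_attained by blast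
    moreover have "c * lam n D' S' A \<le> c * lamN n D' S'"
      using \<open>0 \<le> c\<close> lam_le_lamN \<open>A \<in> Pow (F2n n)\<close> by (simp add: mult_left_mono)
    moreover have "lam n D S A \<le> 1/2 + c * lam n D' S' A"
      using lam_le[OF \<open>N \<le> n\<close>] \<open>A \<in> Pow (F2n n)\<close> by simp
    ultimately show "lamN n D S \<le> 1/2 + c * lamN n D' S'" by linarith
  qed
qed

theorem mainTheorem10:
  fixes d s j k t :: nat
  assumes "d \<ge> 1" and "1 < s" and "s < 2 ^ d"
    and "s = j * 2 ^ k" and "odd j"
  defines "c \<equiv> \<lambda>t::nat. 1/2 - ((2::real) ^ (d - k) - 1) / ((2::real) ^ (d + t + 1) - 1)"
  shows "lamstar (d + t) (2 ^ t * s) \<le> 1/2 + c t * lamstar (d + t + 1) (2 ^ (t + 1) * s)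
    \<and> (\<forall>n A. n \<ge> d + t + 1 \<longrightarrow> A \<subseteq> F2n n \<longrightarrow>
          lam n (d + t) (2 ^ t * s) A \<le> 1/2 + c t * lam n (d + t + 1) (2 ^ (t + 1) * s) A)"
proof -
  have c: "c t = hyperplane_ratio (d + t) (k + t) - 1/2"
    unfolding c_def hyperplane_ratio_minus_half by simp
  have SK: "2 ^ t * s = j * 2 ^ (k + t)" using assms(4) by (simp add: power_add)
  have step: "lam n (d + t) (2 ^ t * s) A \<le> 1/2 + c t * lam n (d + t + 1) (2 ^ (t + 1) * s) A"
    if "d + t + 1 \<le> n" for n A
  proof -
    have "lam n (d + t) (2 ^ t * s) A \<le>
        1/2 + (hyperplane_ratio (d + t) (k + t) - 1/2) * lam n (Suc (d + t)) (2 * (2 ^ t * s)) A"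
      by (rule lam_le_half_plus[OF _ SK assms(5)]) (use that in simp)
    moreover have "Suc (d + t) = d + t + 1" "2 * (2 ^ t * s) = 2 ^ (t + 1) * s" by simp_all
    ultimately show ?thesis unfolding c by (simp only:)
  qed
  have "0 \<le> c t" using c hyperplane_ratio_ge_half by simp
  then have "lamstar (d + t) (2 ^ t * s) \<le> 1/2 + c t * lamstar (d + t + 1) (2 ^ (t + 1) * s)"
    by (rule lamstar_le_of_lam_le) (rule step)
  with step show ?thesis by blast
qed

end
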